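(* Assume (A1), (A2), (A3) (see context). Then $\mathrm x\in\mathbb R^n$ and $\mathrm y\in\mathbb R^{p+q}$ are optimal solutions of (P) and (D), respectively, if and only if there exist $\mathrm Z\in\mathbb R^{r(p+q)}$ and $\mathrm Y=\mathbf 1_m\otimes\mathrm y$ such that $0\in\Phi(\mathrm x,\mathrm Y,\mathrm Z)$.
   Context: Let $m\ge2$, $n_1,\dots,n_m\ge1$, $p,q\ge0$ integers, $n=\sum_in_i$, $\mathcal V=\{1,\dots,m\}$. For $i\in\mathcal V$ let $f_i:\mathbb R^{n_i}\to\mathbb R$, $A_i\in\mathbb R^{p\times n_i}$, $b_i\in\mathbb R^p$, $g_i:\mathbb R^{n_i}\to\mathbb R^q$, $\Omega_i\subseteq\mathbb R^{n_i}$, $G_i(\mathrm x_i)=\mathrm{col}(A_i\mathrm x_i-b_i,g_i(\mathrm x_i))\in\mathbb R^{p+q}$, $\mathcal K=\{0_p\}\times\mathbb R^q_-$, $\mathcal K^\circ=\mathbb R^p\times\mathbb R^q_+$. Problem (P): minimize $\sum_if_i(\mathrm x_i)$ over $\mathrm x=\mathrm{col}(\mathrm x_1,\dots,\mathrm x_m)$ s.t. $\sum_iG_i(\mathrm x_i)\in\mathcal K$, $\mathrm x_i\in\Omega_i$. With $\delta_S$ the indicator of $S$, $\ell_i(\mathrm x_i,\mathrm y)=f_i(\mathrm x_i)+\mathrm y^\top G_i(\mathrm x_i)+\delta_{\Omega_i}(\mathrm x_i)-\delta_{\mathcal K^\circ}(\mathrm y)$; dual (D): maximize $\sum_i\inf_{\mathrm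 x_i}\ell_i(\mathrm x_i,\mathrm y)$ over $\mathrm y\in\mathbb R^{p+q}$. Assumptions. (A1) $\mathcal G=(\mathcal V,\mathcal E)$ connected undirected; $L\in\mathbb R^{m\times m}$ symmetric, compatible with $\mathcal G$ ($L_{ij}=0$ for $i\ne j$, $(i,j)\notin\mathcal E$, and $\mathrm{null}(L)=\mathrm{span}\{\mathbf 1_m\}$), $L=U^\top U$ with $U\in\mathbb R^{r\times m}$ full row rank, $U\mathbf 1_m=0$. (A2) $f_i$ and components of $g_i$ proper closed convex, $\Omega_i$ nonempty closed convex, (P) has an optimal solution. (A3) there is $\bar{\mathrm x}$ with $\bar{\mathrm x}_i\in\mathrm{int}\,\Omega_i$, $\sum_i(A_i\bar{\mathrm x}_i-b_i)=0$, $\sum_ig_i(\bar{\mathrm x}_i)<0$. Operator. $\mathbf U=U\otimes I_{p+q}$; for $\mathrm Y=\mathrm{col}(\mathrm y_1,\dots,\mathrm y_m)$, $\mathrm y_i\in\mathbb R^{p+q}$, $\mathcal L(\mathrm x,\mathrm Y)=\sum_i\ell_i(\mathrm x_i,\mathrm y_i)$; $\partial_{\mathrm x}\mathcal L$ is the convex subdifferential in $\mathrm x$, $\partial_{\mathrm Y}\mathcal L:=-\partial_{\mathrm Y}[-\mathcal L]$; $\Phi(\mathrm x,\mathrm Y,\mathrm Z)=\partial_{\mathrm x}\mathcal L(\mathrm x,\mathrm Y)\times(-\partial_{\mathrm Y}\mathcal L(\mathrm x,\mathrm Y)+\mathbf U^\top\mathrm Z)\times\{-\mathbf U\mathrm Y\}$.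 *)

theory Defs
  imports "Jordan_Normal_Form.Matrix" "HOL-Library.Extended_Real"
begin

definition ones_vec :: "nat \<Rightarrow> real vec" where
  "ones_vec d = vec d (\<lambda>_. 1)"

definition kron_mat :: "real mat \<Rightarrow> real mat \<Rightarrow> real mat" where
  "kron_mat A B = mat (dim_row A * dim_row B) (dim_col A * dim_col B)
     (\<lambda>(i,j). A $$ (i div dim_row B, j div dim_col B) * B $$ (i mod dim_row B, j mod dim_col B))"

definition kron_vec :: "real vec \<Rightarrow> real vec \<Rightarrow> real vec" where
  "kron_vec a b = vec (dim_vec a * dim_vec b) (\<lambda>i. a $ (i div dim_vec b) * b $ (i mod dim_vec b))"

definition block :: "real vec \<Rightarrow> nat \<Rightarrow> nat \<Rightarrow> real vec" where
  "block x off d = vec d (\<lambda>j. x $ (off + j))"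

definition sumv :: "nat \<Rightarrow> ('i \<Rightarrow> real vec) \<Rightarrow> 'i set \<Rightarrow> real vec" where
  "sumv d F I = vec d (\<lambda>j. \<Sum>i\<in>I. F i $ j)"

definition vec_conv :: "nat \<Rightarrow> (nat \<Rightarrow> real vec) \<Rightarrow> real vec \<Rightarrow> bool" where
  "vec_conv d X x \<longleftrightarrow> (\<forall>k. X k \<in> carrier_vec d) \<and> x \<in> carrier_vec d \<and>
     (\<forall>j<d. (\<lambda>k. X k $ j) \<longlonglongrightarrow> x $ j)"

definition convex_set_vec :: "nat \<Rightarrow> real vec set \<Rightarrow> bool" where
  "convex_set_vec d S \<longleftrightarrow> S \<subseteq> carrier_vec d \<and>
     (\<forall>x\<in>S. \<forall>y\<in>S. \<forall>t::real. 0 \<le> t \<and> t \<le> 1 \<longrightarrow> t \<cdot>\<^sub>v x + (1 - t) \<cdot>\<^sub>v y \<in> S)"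

definition closed_set_vec :: "nat \<Rightarrow> real vec set \<Rightarrow> bool" where
  "closed_set_vec d S \<longleftrightarrow> S \<subseteq> carrier_vec d \<and>
     (\<forall>X x. vec_conv d X x \<and> (\<forall>k. X k \<in> S) \<longrightarrow> x \<in> S)"

definition interior_vec :: "nat \<Rightarrow> real vec set \<Rightarrow> real vec set" where
  "interior_vec d S = {x \<in> S. \<exists>e>0. \<forall>z\<in>carrier_vec d.
       (\<Sum>j<d. (z $ j - x $ j)^2) < e^2 \<longrightarrow> z \<in> S}"

text \<open>Convexity and closedness (lower semicontinuity) of a real-valued function on R^d.
  A real-valued function on all of R^d is automatically proper.\<close>
definition convex_fun_vec :: "nat \<Rightarrow> (real vec \<Rightarrow> real) \<Rightarrow> bool" where
  "convex_fun_vec d f \<longleftrightarrow> (\<forall>x\<in>carrier_vec d. \<forall>y\<in>carrier_vec d. \<forall>t::real. 0 \<le> t \<and> t \<le> 1 \<longrightarrow>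
      f (t \<cdot>\<^sub>v x + (1 - t) \<cdot>\<^sub>v y) \<le> t * f x + (1 - t) * f y)"

definition lsc_fun_vec :: "nat \<Rightarrow> (real vec \<Rightarrow> real) \<Rightarrow> bool" where
  "lsc_fun_vec d f \<longleftrightarrow> (\<forall>X x. vec_conv d X x \<longrightarrow>
      (\<forall>c. c < f x \<longrightarrow> (\<exists>N. \<forall>k\<ge>N. c < f (X k))))"

definition proper_closed_convex_vec :: "nat \<Rightarrow> (real vec \<Rightarrow> real) \<Rightarrow> bool" where
  "proper_closed_convex_vec d f \<longleftrightarrow> convex_fun_vec d f \<and> lsc_fun_vec d f"

definition indic :: "'a set \<Rightarrow> 'a \<Rightarrow> ereal" where
  "indic S x = (if x \<in> S then 0 else \<infinity>)"

definition subdiff :: "nat \<Rightarrow> (real vec \<Rightarrow> ereal) \<Rightarrow> real vec \<Rightarrow> real vec set" where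
  "subdiff d \<phi> x = {v \<in> carrier_vec d. \<bar>\<phi> x\<bar> \<noteq> \<infinity> \<and>
      (\<forall>z\<in>carrier_vec d. \<phi> x + ereal (v \<bullet> (z - x)) \<le> \<phi> z)}"

text \<open>Agents are indexed 0..m-1; x = col(x_0,...,x_{m-1}) in R^n, n = sum n_i.\<close>

definition offs :: "(nat \<Rightarrow> nat) \<Rightarrow> nat \<Rightarrow> nat" where
  "offs nn i = (\<Sum>k<i. nn k)"

definition Gfun :: "(nat \<Rightarrow> real mat) \<Rightarrow> (nat \<Rightarrow> real vec) \<Rightarrow> (nat \<Rightarrow> real vec \<Rightarrow> real vec)
    \<Rightarrow> nat \<Rightarrow> real vec \<Rightarrow> real vec" where
  "Gfun A b g i xi = (A i *\<^sub>v xi - b i) @\<^sub>v g i xi"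

definition Kcone :: "nat \<Rightarrow> nat \<Rightarrow> real vec set" where
  "Kcone p q = {v \<in> carrier_vec (p+q). (\<forall>j<p. v $ j = 0) \<and> (\<forall>j. p \<le> j \<and> j < p+q \<longrightarrow> v $ j \<le> 0)}"

definition Kpolar :: "nat \<Rightarrow> nat \<Rightarrow> real vec set" where
  "Kpolar p q = {v \<in> carrier_vec (p+q). \<forall>j. p \<le> j \<and> j < p+q \<longrightarrow> 0 \<le> v $ j}"

definition feasibleP :: "nat \<Rightarrow> (nat \<Rightarrow> nat) \<Rightarrow> nat \<Rightarrow> nat \<Rightarrow> (nat \<Rightarrow> real mat) \<Rightarrow> (nat \<Rightarrow> real vec)
    \<Rightarrow> (nat \<Rightarrow> real vec \<Rightarrow> real vec) \<Rightarrow> (nat \<Rightarrow> real vec set) \<Rightarrow> real vec \<Rightarrow> bool" where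
  "feasibleP m nn p q A b g \<Omega> x \<longleftrightarrow> x \<in> carrier_vec (\<Sum>i<m. nn i) \<and>
     (\<forall>i<m. block x (offs nn i) (nn i) \<in> \<Omega> i) \<and>
     sumv (p+q) (\<lambda>i. Gfun A b g i (block x (offs nn i) (nn i))) {..<m} \<in> Kcone p q"

definition objP :: "nat \<Rightarrow> (nat \<Rightarrow> nat) \<Rightarrow> (nat \<Rightarrow> real vec \<Rightarrow> real) \<Rightarrow> real vec \<Rightarrow> real" where
  "objP m nn f x = (\<Sum>i<m. f i (block x (offs nn i) (nn i)))"

definition optimalP where
  "optimalP m nn p q f A b g \<Omega> x \<longleftrightarrow> feasibleP m nn p q A b g \<Omega> x \<and>
     (\<forall>x'. feasibleP m nn p q A b g \<Omega> x' \<longrightarrow> objP m nn f x \<le> objP m nn f x')"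

definition lagr_i :: "nat \<Rightarrow> nat \<Rightarrow> (nat \<Rightarrow> real vec \<Rightarrow> real) \<Rightarrow> (nat \<Rightarrow> real mat) \<Rightarrow> (nat \<Rightarrow> real vec)
    \<Rightarrow> (nat \<Rightarrow> real vec \<Rightarrow> real vec) \<Rightarrow> (nat \<Rightarrow> real vec set) \<Rightarrow> nat \<Rightarrow> real vec \<Rightarrow> real vec \<Rightarrow> ereal" where
  "lagr_i p q f A b g \<Omega> i xi y =
     ereal (f i xi + y \<bullet> Gfun A b g i xi) + indic (\<Omega> i) xi - indic (Kpolar p q) y"

definition dualfun where
  "dualfun m nn p q f A b g \<Omega> y = (\<Sum>i<m. INF xi\<in>carrier_vec (nn i). lagr_i p q f A b g \<Omega> i xi y)"

definition optimalD where
  "optimalD m nn p q f A b g \<Omega> y \<longleftrightarrow> y \<in> carrier_vec (p+q) \<and>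
     (\<forall>y'\<in>carrier_vec (p+q). dualfun m nn p q f A b g \<Omega> y' \<le> dualfun m nn p q f A b g \<Omega> y)"

definition Lagr where
  "Lagr m nn p q f A b g \<Omega> x Y =
     (\<Sum>i<m. lagr_i p q f A b g \<Omega> i (block x (offs nn i) (nn i)) (block Y (i*(p+q)) (p+q)))"

definition Phi :: "nat \<Rightarrow> (nat \<Rightarrow> nat) \<Rightarrow> nat \<Rightarrow> nat \<Rightarrow> (nat \<Rightarrow> real vec \<Rightarrow> real) \<Rightarrow> (nat \<Rightarrow> real mat)
    \<Rightarrow> (nat \<Rightarrow> real vec) \<Rightarrow> (nat \<Rightarrow> real vec \<Rightarrow> real vec) \<Rightarrow> (nat \<Rightarrow> real vec set) \<Rightarrow> real mat
    \<Rightarrow> real vec \<Rightarrow> real vec \<Rightarrow> real vec \<Rightarrow> (real vec \<times> real vec \<times> real vec) set" where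
  "Phi m nn p q f A b g \<Omega> U x Y Z =
     (let UU = kron_mat U (1\<^sub>m (p+q));
          dx = subdiff (\<Sum>i<m. nn i) (\<lambda>x'. Lagr m nn p q f A b g \<Omega> x' Y) x;
          dY = (\<lambda>v. - v) ` subdiff (m*(p+q)) (\<lambda>Y'. - Lagr m nn p q f A b g \<Omega> x Y') Y
      in dx \<times> {- w + transpose_mat UU *\<^sub>v Z | w. w \<in> dY} \<times> {- (UU *\<^sub>v Y)})"

end

theory Submission
  imports Defs "Jordan_Normal_Form.Determinant"
begin

text \<open>(P) is convex and satisfies Slater's condition, so a Lagrange multiplier exists; it is
  built by adding the constraints one at a time, each multiplier being a supremum of slopes of
  the objective across the constraint surface.  Hence \<open>x\<close> and \<open>y\<close> are optimal for (P) and (D)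
  exactly when they satisfy the saddle-point conditions: \<open>x\<close> is feasible, \<open>y \<in> K\<degree>\<close>,
  \<open>y\<^sup>T G(x) = 0\<close>, and \<open>x\<close> minimises \<open>f + y\<^sup>T G\<close> over \<open>\<Omega>\<close>.

  For the consensus multiplier \<open>Y = 1 \<otimes> y\<close> these are exactly the conditions \<open>0 \<in> \<Phi>(x, Y, Z)\<close>.
  The \<open>x\<close>-component says that \<open>x\<close> minimises the Lagrangian, and \<open>(U \<otimes> I) Y = 0\<close> because
  \<open>U 1 = 0\<close>.  In the \<open>Y\<close>-component, \<open>(U \<otimes> I)\<^sup>T Z\<close> is orthogonal to every consensus vector, so
  the condition forces \<open>y\<close> to maximise \<open>y' \<mapsto> y'\<^sup>T G(x)\<close> over \<open>K\<degree>\<close>, which is feasibility plus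
  complementary slackness.  Conversely, the deviations \<open>G\<^sub>i(x\<^sub>i) - G(x)/m\<close> form a
  \<open>Y\<close>-supergradient with zero block sums, and such vectors lie in the range of \<open>(U \<otimes> I)\<^sup>T\<close>
  because \<open>ker L = span 1\<close>.\<close>

definition vcomb :: "real \<Rightarrow> real vec \<Rightarrow> real vec \<Rightarrow> real vec" where
  "vcomb t x y = t \<cdot>\<^sub>v x + (1 - t) \<cdot>\<^sub>v y"

definition vconvex :: "real vec set \<Rightarrow> bool" where
  "vconvex S \<longleftrightarrow> (\<forall>x\<in>S. \<forall>y\<in>S. \<forall>t. 0 \<le> t \<and> t \<le> 1 \<longrightarrow> vcomb t x y \<in> S)"

definition vconvex_on :: "real vec set \<Rightarrow> (real vec \<Rightarrow> real) \<Rightarrow> bool" where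
  "vconvex_on S F \<longleftrightarrow>
     (\<forall>x\<in>S. \<forall>y\<in>S. \<forall>t. 0 \<le> t \<and> t \<le> 1 \<longrightarrow> F (vcomb t x y) \<le> t * F x + (1 - t) * F y)"

text \<open>Unlike convexity, affinity is required for all real \<open>t\<close>: the multiplier argument
  extrapolates beyond the end points of segments.\<close>
definition vaffine_on :: "real vec set \<Rightarrow> (real vec \<Rightarrow> real) \<Rightarrow> bool" where
  "vaffine_on S F \<longleftrightarrow> (\<forall>x\<in>S. \<forall>y\<in>S. \<forall>t. F (vcomb t x y) = t * F x + (1 - t) * F y)"

lemma vcomb_carrier [simp]:
  "x \<in> carrier_vec n \<Longrightarrow> y \<in> carrier_vec n \<Longrightarrow> vcomb t x y \<in> carrier_vec n"
  unfolding vcomb_def by auto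

lemma vcomb_index:
  "x \<in> carrier_vec n \<Longrightarrow> y \<in> carrier_vec n \<Longrightarrow> j < n \<Longrightarrow> vcomb t x y $ j = t * x $ j + (1 - t) * y $ j"
  unfolding vcomb_def by auto

lemma vconvex_on_subset: "vconvex_on S F \<Longrightarrow> T \<subseteq> S \<Longrightarrow> vconvex_on T F"
  unfolding vconvex_on_def by blast

lemma vaffine_on_subset: "vaffine_on S F \<Longrightarrow> T \<subseteq> S \<Longrightarrow> vaffine_on T F"
  unfolding vaffine_on_def by blast

lemma vaffine_on_imp_vconvex_on: "vaffine_on S F \<Longrightarrow> vconvex_on S F"
  unfolding vaffine_on_def vconvex_on_def by simp

lemma vconvex_on_add_scaled:
  assumes "vconvex_on S F" "vconvex_on S G" "0 \<le> a"
  shows "vconvex_on S (\<lambda>x. F x + a * G x)"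
  unfolding vconvex_on_def
proof (intro ballI allI impI)
  fix x y and t :: real assume xy: "x \<in> S" "y \<in> S" and t: "0 \<le> t \<and> t \<le> 1"
  have "F (vcomb t x y) \<le> t * F x + (1 - t) * F y"
    using assms(1) xy t unfolding vconvex_on_def by blast
  moreover have "G (vcomb t x y) \<le> t * G x + (1 - t) * G y"
    using assms(2) xy t unfolding vconvex_on_def by blast
  then have "a * G (vcomb t x y) \<le> a * (t * G x + (1 - t) * G y)"
    using assms(3) by (rule mult_left_mono)
  ultimately show "F (vcomb t x y) + a * G (vcomb t x y) \<le> t * (F x + a * G x) + (1 - t) * (F y + a * G y)"
    by (simp add: algebra_simps)
qed

lemma vconvex_on_add_affine:
  assumes "vconvex_on S F" "vaffine_on S G"
  shows "vconvex_on S (\<lambda>x. F x + a * G x)"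
  unfolding vconvex_on_def
proof (intro ballI allI impI)
  fix x y and t :: real assume xy: "x \<in> S" "y \<in> S" and t: "0 \<le> t \<and> t \<le> 1"
  have "F (vcomb t x y) \<le> t * F x + (1 - t) * F y"
    using assms(1) xy t unfolding vconvex_on_def by blast
  moreover have "G (vcomb t x y) = t * G x + (1 - t) * G y"
    using assms(2) xy unfolding vaffine_on_def by blast
  then have "a * G (vcomb t x y) = t * (a * G x) + (1 - t) * (a * G y)"
    by (simp add: algebra_simps) (metis distrib_left)
  ultimately show "F (vcomb t x y) + a * G (vcomb t x y) \<le> t * (F x + a * G x) + (1 - t) * (F y + a * G y)"
    by (simp add: algebra_simps)
qed

lemma slope_le_of_convex_bound:
  fixes cx cy Fx Fy Fz v :: real
  assumes "0 < cx" "cy < 0" "v \<le> Fz"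
    and "Fz \<le> (- cy / (cx - cy)) * Fx + (1 - (- cy / (cx - cy))) * Fy"
  shows "(v - Fx) / cx \<le> (Fy - v) / (- cy)"
proof -
  have d: "cx - cy > 0" using assms by simp
  have "v \<le> (- cy / (cx - cy)) * Fx + (1 - (- cy / (cx - cy))) * Fy" using assms by linarith
  also have "\<dots> = (- cy * Fx + cx * Fy) / (cx - cy)"
  proof -
    have "1 - (- cy / (cx - cy)) = cx / (cx - cy)" using d by (simp add: field_simps)
    then show ?thesis by (simp add: add_divide_distrib diff_divide_distrib)
  qed
  finally have "v * (cx - cy) \<le> - cy * Fx + cx * Fy" using d by (simp add: field_simps)
  then have "(v - Fx) * (- cy) \<le> (Fy - v) * cx" by (simp add: algebra_simps)
  then show ?thesis using assms by (simp add: field_simps)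
qed

lemma slope_bound_across_constraint:
  assumes X: "vconvex X" and F: "vconvex_on X F" and c: "vconvex_on X c"
    and c_aff: "\<not> ineq \<Longrightarrow> vaffine_on X c"
    and lb: "\<forall>x\<in>X. (if ineq then c x \<le> 0 else c x = 0) \<longrightarrow> v \<le> F x"
    and x: "x \<in> X" "0 < c x" and y: "y \<in> X" "c y < 0"
  shows "(v - F x) / c x \<le> (F y - v) / (- c y)"
proof -
  define th where "th = - c y / (c x - c y)"
  have th01: "0 \<le> th" "th \<le> 1" using x y by (auto simp: th_def field_simps)
  have zX: "vcomb th x y \<in> X" using X x y th01 unfolding vconvex_def by blast
  have "th * c x + (1 - th) * c y = 0" using x y by (simp add: th_def field_simps)
  moreover have "c (vcomb th x y) \<le> th * c x + (1 - th) * c y"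
    using c x y th01 unfolding vconvex_on_def by blast
  moreover have "\<not> ineq \<Longrightarrow> c (vcomb th x y) = th * c x + (1 - th) * c y"
    using c_aff x y unfolding vaffine_on_def by blast
  ultimately have "if ineq then c (vcomb th x y) \<le> 0 else c (vcomb th x y) = 0" by auto
  then have "v \<le> F (vcomb th x y)" using lb zX by blast
  moreover have "F (vcomb th x y) \<le> th * F x + (1 - th) * F y"
    using F x y th01 unfolding vconvex_on_def by blast
  ultimately show ?thesis using slope_le_of_convex_bound[OF x(2) y(2)] unfolding th_def by blast
qed

text \<open>The multiplier is
  the supremum of the slopes \<open>(v - F x) / c x\<close> over the points with \<open>c x > 0\<close>.\<close>
lemma multiplier_one_constraint:
  assumes X: "vconvex X" and F: "vconvex_on X F" and c: "vconvex_on X c"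
    and c_aff: "\<not> ineq \<Longrightarrow> vaffine_on X c"
    and lb: "\<forall>x\<in>X. (if ineq then c x \<le> 0 else c x = 0) \<longrightarrow> v \<le> F x"
    and slater: "ineq \<Longrightarrow> \<exists>x\<in>X. c x < 0"
    and pos_neg: "\<not> ineq \<Longrightarrow> \<forall>x\<in>X. 0 < c x \<longrightarrow> (\<exists>y\<in>X. c y < 0)"
    and neg_pos: "\<not> ineq \<Longrightarrow> \<forall>x\<in>X. c x < 0 \<longrightarrow> (\<exists>y\<in>X. 0 < c y)"
  shows "\<exists>lam. (ineq \<longrightarrow> 0 \<le> lam) \<and> (\<forall>x\<in>X. v \<le> F x + lam * c x)"
proof -
  have slope: "(v - F x) / c x \<le> (F y - v) / (- c y)"
    if "x \<in> X" "0 < c x" "y \<in> X" "c y < 0" for x y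
    using slope_bound_across_constraint[OF X F c _ lb that] c_aff by blast
  define S where "S = {(v - F x) / c x | x. x \<in> X \<and> 0 < c x}"
  show ?thesis
  proof (cases "S = {}")
    case True
    have "v \<le> F x" if x: "x \<in> X" for x
    proof -
      have "\<not> 0 < c x" using True x unfolding S_def by blast
      moreover have "\<not> (\<not> ineq \<and> c x < 0)"
        using neg_pos x True unfolding S_def by blast
      ultimately show ?thesis using lb x by (auto split: if_splits)
    qed
    then show ?thesis by (intro exI[of _ 0]) auto
  next
    case False
    then obtain x0 where x0: "x0 \<in> X" "0 < c x0" unfolding S_def by blast
    obtain y0 where y0: "y0 \<in> X" "c y0 < 0" using slater pos_neg x0 by (cases ineq) auto
    have bdd: "bdd_above S" unfolding S_def bdd_above_def using slope[OF _ _ y0] by blast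
    define lam where "lam = (if ineq then max 0 (Sup S) else Sup S)"
    have "v \<le> F x + lam * c x" if x: "x \<in> X" for x
    proof (cases "c x" "0 :: real" rule: linorder_cases)
      case greater
      have "(v - F x) / c x \<in> S" using x greater unfolding S_def by blast
      then have "(v - F x) / c x \<le> lam" using cSup_upper[OF _ bdd] unfolding lam_def by fastforce
      then show ?thesis using greater by (simp add: field_simps)
    next
      case equal
      then show ?thesis using lb x by (auto split: if_splits)
    next
      case less
      have "Sup S \<le> (F x - v) / (- c x)"
      proof (rule cSup_least[OF False])
        fix s assume "s \<in> S"
        then obtain x' where "x' \<in> X" "0 < c x'" "s = (v - F x') / c x'" unfolding S_def by blast
        then show "s \<le> (F x - v) / (- c x)" using slope[OF _ _ x less] by simp
      qed
      moreover have "0 \<le> (F x - v) / (- c x)" if ineq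
        using lb x less that by (intro divide_nonneg_pos) auto
      ultimately have "lam \<le> (F x - v) / (- c x)" unfolding lam_def by auto
      then show ?thesis using less by (simp add: field_simps)
    qed
    moreover have "ineq \<longrightarrow> 0 \<le> lam" unfolding lam_def by auto
    ultimately show ?thesis by blast
  qed
qed

definition constr_holds :: "(nat \<Rightarrow> bool) \<Rightarrow> (nat \<Rightarrow> real vec \<Rightarrow> real) \<Rightarrow> nat \<Rightarrow> real vec \<Rightarrow> bool" where
  "constr_holds ineq C j x \<longleftrightarrow> (if ineq j then C j x \<le> 0 else C j x = 0)"

lemma vconvex_constr_holds:
  assumes X: "vconvex X"
    and C_cvx: "\<forall>j\<in>J. vconvex_on X (C j)" and C_aff: "\<forall>j\<in>J. \<not> ineq j \<longrightarrow> vaffine_on X (C j)"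
  shows "vconvex {x\<in>X. \<forall>j\<in>J. constr_holds ineq C j x}"
  unfolding vconvex_def
proof (intro ballI allI impI)
  fix x y and t :: real
  assume x: "x \<in> {x\<in>X. \<forall>j\<in>J. constr_holds ineq C j x}" and y: "y \<in> {x\<in>X. \<forall>j\<in>J. constr_holds ineq C j x}"
    and t: "0 \<le> t \<and> t \<le> 1"
  have "constr_holds ineq C j (vcomb t x y)" if j: "j \<in> J" for j
  proof (cases "ineq j")
    case True
    have "C j (vcomb t x y) \<le> t * C j x + (1 - t) * C j y"
      using C_cvx j x y t unfolding vconvex_on_def by blast
    moreover have "C j x \<le> 0" "C j y \<le> 0" using x y j True unfolding constr_holds_def by auto
    then have "t * C j x \<le> 0" "(1 - t) * C j y \<le> 0" using t by (auto simp: mult_nonneg_nonpos)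
    ultimately show ?thesis using True unfolding constr_holds_def by simp
  next
    case False
    have "C j (vcomb t x y) = t * C j x + (1 - t) * C j y"
      using C_aff j False x y unfolding vaffine_on_def by blast
    moreover have "C j x = 0" "C j y = 0" using x y j False unfolding constr_holds_def by auto
    ultimately show ?thesis using False unfolding constr_holds_def by simp
  qed
  moreover have "vcomb t x y \<in> X" using X x y t unfolding vconvex_def by blast
  ultimately show "vcomb t x y \<in> {x\<in>X. \<forall>j\<in>J. constr_holds ineq C j x}" by blast
qed

lemma extrapolation_flips_sign:
  assumes aff: "\<forall>j\<in>J. vaffine_on \<Omega> (C j)" and xb: "xb \<in> \<Omega>" "\<forall>j\<in>J. C j xb = 0"
    and core: "\<forall>x\<in>\<Omega>. \<exists>t>1. vcomb t xb x \<in> \<Omega>"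
    and x: "x \<in> \<Omega>" and c: "c \<in> J" "C c x \<noteq> 0"
  shows "\<exists>t. vcomb t xb x \<in> \<Omega> \<and> (\<forall>j\<in>J. C j (vcomb t xb x) = (1 - t) * C j x) \<and>
    C c (vcomb t xb x) * C c x < 0"
proof -
  obtain t where t: "t > 1" "vcomb t xb x \<in> \<Omega>" using core x by blast
  have C_t: "\<forall>j\<in>J. C j (vcomb t xb x) = (1 - t) * C j x"
    using aff xb x unfolding vaffine_on_def by auto
  have "0 < C c x * C c x" using c(2) not_real_square_gt_zero by blast
  then have "(1 - t) * C c x * C c x < 0" using t(1) by (simp add: mult_neg_pos mult.assoc)
  then show ?thesis using t(2) C_t c(1) by auto
qed

lemma multiplier_first_constraint:
  assumes \<Omega>: "vconvex \<Omega>"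
    and C_cvx: "\<forall>j\<in>set (c # cs). vconvex_on \<Omega> (C j)"
    and C_aff: "\<forall>j\<in>set (c # cs). \<not> ineq j \<longrightarrow> vaffine_on \<Omega> (C j)"
    and ineq_first: "sorted_wrt (\<lambda>i j. ineq j \<longrightarrow> ineq i) (c # cs)"
    and xb: "xb \<in> \<Omega>" "\<forall>j\<in>set (c # cs). if ineq j then C j xb < 0 else C j xb = 0"
    and core: "\<forall>x\<in>\<Omega>. \<exists>t>1. vcomb t xb x \<in> \<Omega>"
    and F: "vconvex_on \<Omega> F"
    and lb: "\<forall>x\<in>\<Omega>. (\<forall>j\<in>set (c # cs). constr_holds ineq C j x) \<longrightarrow> v \<le> F x"
  shows "\<exists>lam. (ineq c \<longrightarrow> 0 \<le> lam) \<and>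
    (\<forall>x\<in>\<Omega>. (\<forall>j\<in>set cs. constr_holds ineq C j x) \<longrightarrow> v \<le> F x + lam * C c x)"
proof -
  define X where "X = {x\<in>\<Omega>. \<forall>j\<in>set cs. constr_holds ineq C j x}"
  have XO: "X \<subseteq> \<Omega>" unfolding X_def by blast
  have extrapolate: "\<exists>y\<in>X. C c y * C c x < 0"
    if eq: "\<not> ineq c" and x: "x \<in> X" "C c x \<noteq> 0" for x
  proof -
    have all_eq: "\<forall>j\<in>set (c # cs). \<not> ineq j" using ineq_first eq by auto
    have aff: "\<forall>j\<in>set (c # cs). vaffine_on \<Omega> (C j)" and zero: "\<forall>j\<in>set (c # cs). C j xb = 0"
      using C_aff xb(2) all_eq by auto
    have "x \<in> \<Omega>" using x(1) XO by blast
    then obtain t where t: "vcomb t xb x \<in> \<Omega>" "\<forall>j\<in>set (c # cs). C j (vcomb t xb x) = (1 - t) * C j x"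
      "C c (vcomb t xb x) * C c x < 0"
      using extrapolation_flips_sign[OF aff xb(1) zero core _ list.set_intros(1) x(2)] by blast
    then have "vcomb t xb x \<in> X" using x all_eq unfolding X_def constr_holds_def by auto
    then show ?thesis using t(3) by blast
  qed
  have "\<exists>lam. (ineq c \<longrightarrow> 0 \<le> lam) \<and> (\<forall>x\<in>X. v \<le> F x + lam * C c x)"
  proof (rule multiplier_one_constraint)
    show "vconvex X" unfolding X_def using vconvex_constr_holds[OF \<Omega>] C_cvx C_aff by simp
    show "vconvex_on X F" using F XO by (rule vconvex_on_subset)
    show "vconvex_on X (C c)" using C_cvx XO vconvex_on_subset by auto
    show "vaffine_on X (C c)" if "\<not> ineq c" using C_aff XO vaffine_on_subset that by auto
    show "\<forall>x\<in>X. (if ineq c then C c x \<le> 0 else C c x = 0) \<longrightarrow> v \<le> F x"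
      using lb unfolding X_def constr_holds_def by auto
    show "\<exists>x\<in>X. C c x < 0" if "ineq c"
      using xb that unfolding X_def constr_holds_def by (auto simp: less_imp_le)
    show "\<forall>x\<in>X. 0 < C c x \<longrightarrow> (\<exists>y\<in>X. C c y < 0)" if "\<not> ineq c"
      using extrapolate[OF that] by (fastforce simp: mult_less_0_iff)
    show "\<forall>x\<in>X. C c x < 0 \<longrightarrow> (\<exists>y\<in>X. 0 < C c y)" if "\<not> ineq c"
      using extrapolate[OF that] by (fastforce simp: mult_less_0_iff)
  qed
  then show ?thesis unfolding X_def by blast
qed

text \<open>Inequality constraints come first in \<open>js\<close>:
  when an equality constraint is peeled off, all remaining ones are affine equalities, so the
  feasible set of the remaining constraints is closed under extrapolation beyond the Slater
  point \<open>xb\<close>.\<close>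
lemma multipliers_exist:
  assumes \<Omega>: "vconvex \<Omega>"
    and C_cvx: "\<forall>j\<in>set js. vconvex_on \<Omega> (C j)"
    and C_aff: "\<forall>j\<in>set js. \<not> ineq j \<longrightarrow> vaffine_on \<Omega> (C j)"
    and ineq_first: "sorted_wrt (\<lambda>i j. ineq j \<longrightarrow> ineq i) js"
    and dist: "distinct js"
    and xb: "xb \<in> \<Omega>" "\<forall>j\<in>set js. if ineq j then C j xb < 0 else C j xb = 0"
    and core: "\<forall>x\<in>\<Omega>. \<exists>t>1. vcomb t xb x \<in> \<Omega>"
    and F: "vconvex_on \<Omega> F"
    and lb: "\<forall>x\<in>\<Omega>. (\<forall>j\<in>set js. constr_holds ineq C j x) \<longrightarrow> v \<le> F x"
  shows "\<exists>lam. (\<forall>j\<in>set js. ineq j \<longrightarrow> 0 \<le> lam j) \<and>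
    (\<forall>x\<in>\<Omega>. v \<le> F x + (\<Sum>j\<in>set js. lam j * C j x))"
  using C_cvx C_aff ineq_first dist xb(2) F lb
proof (induction js arbitrary: F)
  case Nil
  then show ?case by auto
next
  case (Cons c cs)
  obtain lam0 where lam0: "ineq c \<longrightarrow> 0 \<le> lam0"
    "\<forall>x\<in>\<Omega>. (\<forall>j\<in>set cs. constr_holds ineq C j x) \<longrightarrow> v \<le> F x + lam0 * C c x"
    using multiplier_first_constraint[OF \<Omega> Cons.prems(1-3) xb(1) Cons.prems(5) core Cons.prems(6,7)]
    by blast
  define F' where "F' = (\<lambda>x. F x + lam0 * C c x)"
  have "vconvex_on \<Omega> F'"
    using vconvex_on_add_scaled[OF Cons.prems(6)] vconvex_on_add_affine[OF Cons.prems(6)]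
      Cons.prems(1,2) lam0(1) unfolding F'_def by (cases "ineq c") auto
  moreover have "\<forall>j\<in>set cs. vconvex_on \<Omega> (C j)" "\<forall>j\<in>set cs. \<not> ineq j \<longrightarrow> vaffine_on \<Omega> (C j)"
    "sorted_wrt (\<lambda>i j. ineq j \<longrightarrow> ineq i) cs" "distinct cs"
    "\<forall>j\<in>set cs. if ineq j then C j xb < 0 else C j xb = 0"
    using Cons.prems(1-5) by auto
  ultimately obtain lam where lam: "\<forall>j\<in>set cs. ineq j \<longrightarrow> 0 \<le> lam j"
      "\<forall>x\<in>\<Omega>. v \<le> F' x + (\<Sum>j\<in>set cs. lam j * C j x)"
    using Cons.IH lam0(2) unfolding F'_def by blast
  have c_new: "c \<notin> set cs" using Cons.prems(4) by simp
  have "(\<Sum>j\<in>set (c # cs). (lam(c := lam0)) j * C j x) = lam0 * C c x + (\<Sum>j\<in>set cs. lam j * C j x)" for x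
    using c_new by (auto intro!: sum.cong)
  then show ?case
    using lam lam0(1) c_new unfolding F'_def by (intro exI[of _ "lam(c := lam0)"]) (auto simp: add.assoc)
qed
lemma block_carrier [simp]: "block x off d \<in> carrier_vec d"
  unfolding block_def by simp

lemma block_dim [simp]: "dim_vec (block x off d) = d"
  unfolding block_def by simp

lemma block_index [simp]: "j < d \<Longrightarrow> block x off d $ j = x $ (off + j)"
  unfolding block_def by simp

lemma block_vcomb:
  assumes "x \<in> carrier_vec n" "y \<in> carrier_vec n" "off + d \<le> n"
  shows "block (vcomb t x y) off d = vcomb t (block x off d) (block y off d)"
  unfolding vcomb_def by (rule eq_vecI) (use assms in \<open>auto simp: carrier_vecD\<close>)

lemma sumv_index: "j < d \<Longrightarrow> sumv d F I $ j = (\<Sum>i\<in>I. F i $ j)"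
  unfolding sumv_def by simp

lemma sumv_carrier [simp]: "sumv d F I \<in> carrier_vec d"
  unfolding sumv_def by simp

lemma sumv_dim [simp]: "dim_vec (sumv d F I) = d"
  unfolding sumv_def by simp

lemma offs_Suc: "offs nn (Suc i) = offs nn i + nn i"
  unfolding offs_def by simp

lemma offs_mono: "i \<le> j \<Longrightarrow> offs nn i \<le> offs nn j"
  unfolding offs_def by (intro sum_mono2) auto

lemma offs_add_le: "i < m \<Longrightarrow> offs nn i + nn i \<le> (\<Sum>i<m. nn i)"
  using offs_mono[of "Suc i" m nn] unfolding offs_Suc by (simp add: offs_def)

lemma exists_block_update:
  assumes x: "x \<in> carrier_vec (\<Sum>i<m. nn i)" and i: "i < m" and xi: "xi \<in> carrier_vec (nn i)"
  shows "\<exists>z\<in>carrier_vec (\<Sum>i<m. nn i). block z (offs nn i) (nn i) = xi \<and>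
           (\<forall>j<m. j \<noteq> i \<longrightarrow> block z (offs nn j) (nn j) = block x (offs nn j) (nn j))"
proof -
  define N where "N = (\<Sum>i<m. nn i)"
  define z where "z = vec N (\<lambda>k. if offs nn i \<le> k \<and> k < offs nn i + nn i then xi $ (k - offs nn i) else x $ k)"
  have "block z (offs nn i) (nn i) = xi"
    using xi offs_add_le[OF i, of nn] unfolding z_def N_def by (intro eq_vecI) auto
  moreover have "block z (offs nn j) (nn j) = block x (offs nn j) (nn j)" if j: "j < m" "j \<noteq> i" for j
  proof (rule eq_vecI)
    fix l assume "l < dim_vec (block x (offs nn j) (nn j))"
    then have l: "l < nn j" by simp
    have "offs nn (Suc j) \<le> offs nn i \<or> offs nn (Suc i) \<le> offs nn j"
      using j(2) by (cases "j < i") (auto intro: offs_mono)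
    then have "\<not> (offs nn i \<le> offs nn j + l \<and> offs nn j + l < offs nn i + nn i)"
      using l unfolding offs_Suc by auto
    moreover have "offs nn j + l < N" using l offs_add_le[OF j(1), of nn] unfolding N_def by simp
    ultimately show "block z (offs nn j) (nn j) $ l = block x (offs nn j) (nn j) $ l"
      unfolding z_def using l by auto
  qed simp
  moreover have "z \<in> carrier_vec N" unfolding z_def by simp
  ultimately show ?thesis unfolding N_def by blast
qed

lemma mult_add_div_mod:
  assumes "i < m" "k < (d::nat)"
  shows "i * d + k < m * d" "(i * d + k) div d = i" "(i * d + k) mod d = k"
proof -
  have "i * d + k < (i + 1) * d" using assms by simp
  also have "\<dots> \<le> m * d" using assms by (intro mult_right_mono) auto
  finally show "i * d + k < m * d" .
  show "(i * d + k) div d = i" "(i * d + k) mod d = k"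
    using assms(2) by simp_all
qed

lemma sum_mult_split:
  fixes F :: "nat \<Rightarrow> 'a::comm_monoid_add"
  shows "(\<Sum>J<m*d. F J) = (\<Sum>i<m. \<Sum>k<d. F (i*d + k))"
proof -
  have "(\<Sum>J<m*d. F J) = (\<Sum>i<m. sum F {i*d..<i*d+d})" by (rule sum.nat_group[symmetric])
  also have "\<dots> = (\<Sum>i<m. \<Sum>k<d. F (i*d + k))"
  proof (rule sum.cong[OF refl])
    fix i
    have "sum F {i*d..<i*d+d} = sum F {0+i*d..<d+i*d}" by (simp add: add.commute)
    also have "\<dots> = (\<Sum>k=0..<d. F (k + i*d))" by (rule sum.shift_bounds_nat_ivl)
    finally show "sum F {i*d..<i*d+d} = (\<Sum>k<d. F (i*d + k))"
      by (simp add: atLeast0LessThan add.commute)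
  qed
  finally show ?thesis .
qed

abbreviation consensus :: "nat \<Rightarrow> real vec \<Rightarrow> real vec" where
  "consensus m y \<equiv> kron_vec (ones_vec m) y"

lemma consensus_dim [simp]: "dim_vec (consensus m y) = m * dim_vec y"
  unfolding kron_vec_def ones_vec_def by simp

lemma consensus_index:
  assumes "i < m" "j < dim_vec y"
  shows "consensus m y $ (i * dim_vec y + j) = y $ j"
  unfolding kron_vec_def ones_vec_def using mult_add_div_mod[OF assms] assms by simp

lemma consensus_carrier: "y \<in> carrier_vec d \<Longrightarrow> consensus m y \<in> carrier_vec (m * d)"
  by (metis carrier_vecD carrier_vecI consensus_dim)

lemma consensus_block:
  assumes "i < m" "y \<in> carrier_vec d"
  shows "block (consensus m y) (i * d) d = y"
proof -
  have "dim_vec y = d" using assms(2) by simp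
  then show ?thesis using consensus_index[OF assms(1), of _ y] by (intro eq_vecI) auto
qed

lemma consensus_diff:
  assumes "y \<in> carrier_vec d" "y' \<in> carrier_vec d"
  shows "consensus m y' - consensus m y = consensus m (y' - y)"
proof (rule eq_vecI)
  fix J assume "J < dim_vec (consensus m (y' - y))"
  then have "J < m * d" using assms by simp
  then have "0 < d" by (cases d) auto
  then have "J div d < m" "J mod d < d" using \<open>J < m * d\<close> by (auto simp: less_mult_imp_div_less)
  then show "(consensus m y' - consensus m y) $ J = consensus m (y' - y) $ J"
    using assms \<open>J < m * d\<close> unfolding kron_vec_def ones_vec_def by simp
qed (use assms in simp)

abbreviation kron_id :: "real mat \<Rightarrow> nat \<Rightarrow> real mat" where
  "kron_id U d \<equiv> kron_mat U (1\<^sub>m d)"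

lemma kron_mat_dims [simp]:
  "dim_row (kron_mat A B) = dim_row A * dim_row B" "dim_col (kron_mat A B) = dim_col A * dim_col B"
  unfolding kron_mat_def by simp_all

lemma kron_id_carrier: "U \<in> carrier_mat r m \<Longrightarrow> kron_id U d \<in> carrier_mat (r * d) (m * d)"
  unfolding kron_mat_def by simp

lemma kron_id_index:
  assumes U: "U \<in> carrier_mat r m" and I: "I < r * d" and J: "J < m * d"
  shows "kron_id U d $$ (I, J) = U $$ (I div d, J div d) * (if I mod d = J mod d then 1 else 0)"
proof -
  have "0 < d" using I by (cases d) auto
  then have "I mod d < d" "J mod d < d" by auto
  then show ?thesis unfolding kron_mat_def using U I J by simp
qed

lemma kron_id_mult_consensus:
  assumes U: "U \<in> carrier_mat r m" and U1: "U *\<^sub>v ones_vec m = 0\<^sub>v r" and w: "w \<in> carrier_vec d"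
  shows "kron_id U d *\<^sub>v consensus m w = 0\<^sub>v (r * d)"
proof (rule eq_vecI)
  fix I assume "I < dim_vec (0\<^sub>v (r * d))"
  then have I: "I < r * d" by simp
  then have d: "0 < d" by (cases d) auto
  have a: "I div d < r" using I by (simp add: less_mult_imp_div_less)
  have dw: "dim_vec w = d" using w by simp
  have "(kron_id U d *\<^sub>v consensus m w) $ I = (\<Sum>J<m*d. kron_id U d $$ (I, J) * consensus m w $ J)"
    using U I by (simp add: scalar_prod_def row_def atLeast0LessThan dw)
  also have "\<dots> = (\<Sum>i<m. \<Sum>k<d. kron_id U d $$ (I, i*d+k) * consensus m w $ (i*d+k))"
    by (rule sum_mult_split)
  also have "\<dots> = (\<Sum>i<m. \<Sum>k<d. U $$ (I div d, i) * (if I mod d = k then w $ k else 0))"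
    using kron_id_index[OF U I] mult_add_div_mod consensus_index[of _ m _ w] dw
    by (intro sum.cong refl) auto
  also have "\<dots> = (\<Sum>i<m. U $$ (I div d, i) * w $ (I mod d))"
    using d by (simp add: if_distrib[of "\<lambda>x. _ * x"] sum.delta cong: if_cong)
  also have "\<dots> = (U *\<^sub>v ones_vec m) $ (I div d) * w $ (I mod d)"
    using U a by (simp add: scalar_prod_def row_def ones_vec_def atLeast0LessThan sum_distrib_right)
  finally show "(kron_id U d *\<^sub>v consensus m w) $ I = 0\<^sub>v (r * d) $ I" using U1 a I by simp
qed (use U in simp)

lemma transpose_kron_id_index:
  assumes U: "U \<in> carrier_mat r m" and Z: "Z \<in> carrier_vec (r * d)" and J: "J < m * d"
  shows "(transpose_mat (kron_id U d) *\<^sub>v Z) $ J = (\<Sum>a<r. U $$ (a, J div d) * Z $ (a * d + J mod d))"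
proof -
  have "0 < d" using J by (cases d) auto
  then have jd: "J div d < m" "J mod d < d" using J by (auto simp: less_mult_imp_div_less)
  have "(transpose_mat (kron_id U d) *\<^sub>v Z) $ J = (\<Sum>I<r*d. kron_id U d $$ (I, J) * Z $ I)"
    using U J Z by (simp add: scalar_prod_def row_def atLeast0LessThan)
  also have "\<dots> = (\<Sum>a<r. \<Sum>k<d. kron_id U d $$ (a*d+k, J) * Z $ (a*d+k))"
    by (rule sum_mult_split)
  also have "\<dots> = (\<Sum>a<r. \<Sum>k<d. U $$ (a, J div d) * (if k = J mod d then Z $ (a*d+k) else 0))"
    using kron_id_index[OF U _ J] mult_add_div_mod by (intro sum.cong refl) auto
  also have "\<dots> = (\<Sum>a<r. U $$ (a, J div d) * Z $ (a * d + J mod d))"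
    using jd by (simp add: if_distrib[of "\<lambda>x. _ * x"] sum.delta' cong: if_cong)
  finally show ?thesis .
qed

lemma transpose_kron_id_inner_consensus:
  assumes U: "U \<in> carrier_mat r m" and U1: "U *\<^sub>v ones_vec m = 0\<^sub>v r"
    and Z: "Z \<in> carrier_vec (r * d)" and w: "w \<in> carrier_vec d"
  shows "(transpose_mat (kron_id U d) *\<^sub>v Z) \<bullet> consensus m w = 0"
proof -
  have "consensus m w \<in> carrier_vec (m * d)" using w by (rule consensus_carrier)
  then have "(transpose_mat (kron_id U d) *\<^sub>v Z) \<bullet> consensus m w = Z \<bullet> (kron_id U d *\<^sub>v consensus m w)"
    by (rule transpose_vec_mult_scalar[OF kron_id_carrier[OF U] _ Z])
  then show ?thesis using kron_id_mult_consensus[OF U U1 w] Z by simp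
qed

lemma smult_one_mat_mult_vec:
  fixes w :: "'a::comm_ring_1 vec"
  assumes "w \<in> carrier_vec n" shows "(c \<cdot>\<^sub>m 1\<^sub>m n) *\<^sub>v w = c \<cdot>\<^sub>v w"
proof (rule eq_vecI)
  fix i assume "i < dim_vec (c \<cdot>\<^sub>v w)"
  then have i: "i < n" using assms by simp
  have "\<And>k. c * (if i = k then 1 else 0) * w $ k = (if i = k then c * w $ k else 0)" by simp
  then show "((c \<cdot>\<^sub>m 1\<^sub>m n) *\<^sub>v w) $ i = (c \<cdot>\<^sub>v w) $ i" using assms i
    by (simp add: scalar_prod_def row_def)
qed (use assms in simp)

lemma ones_vec_carrier: "ones_vec m \<in> carrier_vec m"
  unfolding ones_vec_def by simp

lemma ones_vec_inner_self: "ones_vec m \<bullet> ones_vec m = real m"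
  unfolding ones_vec_def scalar_prod_def by simp

lemma add_zero_smult_vec: "u \<in> carrier_vec n \<Longrightarrow> w \<in> carrier_vec n \<Longrightarrow> u + 0 \<cdot>\<^sub>v w = (u :: real vec)"
  by (intro eq_vecI) auto

lemma inner_ones_vec: "v \<in> carrier_vec m \<Longrightarrow> ones_vec m \<bullet> v = (\<Sum>i<m. v $ i)"
  unfolding ones_vec_def scalar_prod_def by (simp add: atLeast0LessThan)

lemma laplacian_plus_ones_mult:
  fixes L :: "real mat"
  assumes L_dim: "L \<in> carrier_mat m m" and L_sym: "transpose_mat L = L"
    and L1: "L *\<^sub>v ones_vec m = 0\<^sub>v m" and v: "v \<in> carrier_vec m"
  shows "(L + mat m m (\<lambda>_. 1)) *\<^sub>v v = L *\<^sub>v v + (ones_vec m \<bullet> v) \<cdot>\<^sub>v ones_vec m"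
    and "ones_vec m \<bullet> ((L + mat m m (\<lambda>_. 1)) *\<^sub>v v) = real m * (ones_vec m \<bullet> v)"
proof -
  have "mat m m (\<lambda>_. 1) *\<^sub>v v = (ones_vec m \<bullet> v) \<cdot>\<^sub>v ones_vec m"
    using v unfolding ones_vec_def by (intro eq_vecI) (auto simp: scalar_prod_def row_def)
  then show Mv: "(L + mat m m (\<lambda>_. 1)) *\<^sub>v v = L *\<^sub>v v + (ones_vec m \<bullet> v) \<cdot>\<^sub>v ones_vec m"
    using add_mult_distrib_mat_vec[OF L_dim _ v] by simp
  have "ones_vec m \<bullet> (L *\<^sub>v v) = 0"
    using transpose_vec_mult_scalar[OF L_dim v ones_vec_carrier] L_sym L1 v by simp
  then show "ones_vec m \<bullet> ((L + mat m m (\<lambda>_. 1)) *\<^sub>v v) = real m * (ones_vec m \<bullet> v)"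
    unfolding Mv using L_dim v ones_vec_carrier ones_vec_inner_self by (simp add: scalar_prod_add_distrib[of _ m])
qed

lemma laplacian_kernel_ones:
  assumes L_null: "{v \<in> carrier_vec m. L *\<^sub>v v = 0\<^sub>v m} = {c \<cdot>\<^sub>v ones_vec m | c. True}"
  shows "L *\<^sub>v ones_vec m = 0\<^sub>v m"
proof -
  have "ones_vec m \<in> {c \<cdot>\<^sub>v ones_vec m | c. True}" by (auto intro!: exI[of _ 1])
  then show ?thesis using L_null by blast
qed

lemma det_laplacian_plus_ones_nonzero:
  fixes L :: "real mat"
  assumes m: "0 < m" and L_dim: "L \<in> carrier_mat m m" and L_sym: "transpose_mat L = L"
    and L_null: "{v \<in> carrier_vec m. L *\<^sub>v v = 0\<^sub>v m} = {c \<cdot>\<^sub>v ones_vec m | c. True}"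
  shows "det (L + mat m m (\<lambda>_. 1)) \<noteq> 0"
proof
  note M = laplacian_plus_ones_mult[OF L_dim L_sym laplacian_kernel_ones[OF L_null]]
  assume "det (L + mat m m (\<lambda>_. 1)) = 0"
  moreover have "L + mat m m (\<lambda>_. 1) \<in> carrier_mat m m" using L_dim by simp
  ultimately obtain v where v: "v \<in> carrier_vec m" "v \<noteq> 0\<^sub>v m" "(L + mat m m (\<lambda>_. 1)) *\<^sub>v v = 0\<^sub>v m"
    using det_0_iff_vec_prod_zero_field by blast
  have sum0: "ones_vec m \<bullet> v = 0" using M(2)[OF v(1)] v(3) m v(1) ones_vec_carrier by simp
  have "L *\<^sub>v v \<in> carrier_vec m" using L_dim v(1) by simp
  then have "L *\<^sub>v v = 0\<^sub>v m" using M(1)[OF v(1)] v(3) sum0 add_zero_smult_vec[OF _ ones_vec_carrier] by simp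
  then obtain c where c: "v = c \<cdot>\<^sub>v ones_vec m" using L_null v(1) by blast
  then have "c * real m = 0" using sum0 ones_vec_inner_self[of m] ones_vec_carrier[of m] by simp
  moreover have "0 \<cdot>\<^sub>v ones_vec m = 0\<^sub>v m" by (intro eq_vecI) (auto simp: ones_vec_def)
  ultimately show False using c v(2) m by auto
qed

text \<open>Since \<open>L = U\<^sup>T U\<close> has kernel spanned by \<open>1\<close>, the matrix \<open>M = L + 1 1\<^sup>T\<close> is invertible;
  solving \<open>M \<eta> = w\<close> for a zero-sum \<open>w\<close> forces \<open>1\<^sup>T \<eta> = 0\<close>, hence \<open>w = L \<eta> = U\<^sup>T (U \<eta>)\<close>.\<close>
lemma zero_sum_in_range_transpose:
  fixes L U :: "real mat"
  assumes m: "0 < m" and L_dim: "L \<in> carrier_mat m m" and L_sym: "transpose_mat L = L"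
    and L_null: "{v \<in> carrier_vec m. L *\<^sub>v v = 0\<^sub>v m} = {c \<cdot>\<^sub>v ones_vec m | c. True}"
    and U_dim: "U \<in> carrier_mat r m" and L_U: "L = transpose_mat U * U"
    and w: "w \<in> carrier_vec m" and w0: "(\<Sum>i<m. w $ i) = 0"
  shows "\<exists>z\<in>carrier_vec r. transpose_mat U *\<^sub>v z = w"
proof -
  define M where "M = L + mat m m (\<lambda>_. 1)"
  note Mv = laplacian_plus_ones_mult[OF L_dim L_sym laplacian_kernel_ones[OF L_null], folded M_def]
  have M: "M \<in> carrier_mat m m" unfolding M_def using L_dim by simp
  have det: "det M \<noteq> 0" unfolding M_def by (rule det_laplacian_plus_ones_nonzero[OF m L_dim L_sym L_null])
  define eta where "eta = (1 / det M) \<cdot>\<^sub>v (adj_mat M *\<^sub>v w)"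
  have adj: "adj_mat M \<in> carrier_mat m m" using adj_mat(1)[OF M] .
  have eta: "eta \<in> carrier_vec m" unfolding eta_def using adj w by simp
  have "M *\<^sub>v eta = (1 / det M) \<cdot>\<^sub>v ((M * adj_mat M) *\<^sub>v w)"
    unfolding eta_def using M adj w by (simp add: mult_mat_vec assoc_mult_mat_vec)
  then have M_eta: "M *\<^sub>v eta = w"
    using adj_mat(2)[OF M] smult_one_mat_mult_vec[OF w] det by (simp add: smult_smult_assoc)
  then have "ones_vec m \<bullet> eta = 0" using Mv(2)[OF eta] w0 w m by (simp add: inner_ones_vec)
  moreover have "L *\<^sub>v eta \<in> carrier_vec m" using L_dim eta by simp
  ultimately have "L *\<^sub>v eta = w" using Mv(1)[OF eta] M_eta add_zero_smult_vec[OF _ ones_vec_carrier] by simp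
  then have "transpose_mat U *\<^sub>v (U *\<^sub>v eta) = w" using U_dim eta L_U by (simp add: assoc_mult_mat_vec)
  moreover have "U *\<^sub>v eta \<in> carrier_vec r" using U_dim by (simp add: carrier_vecI)
  ultimately show ?thesis by blast
qed

lemma zero_block_sums_in_range_transpose_kron_id:
  fixes L U :: "real mat"
  assumes m: "0 < m" and L_dim: "L \<in> carrier_mat m m" and L_sym: "transpose_mat L = L"
    and L_null: "{v \<in> carrier_vec m. L *\<^sub>v v = 0\<^sub>v m} = {c \<cdot>\<^sub>v ones_vec m | c. True}"
    and U_dim: "U \<in> carrier_mat r m" and L_U: "L = transpose_mat U * U"
    and W: "W \<in> carrier_vec (m * d)" and W0: "\<forall>k<d. (\<Sum>i<m. W $ (i * d + k)) = 0"
  shows "\<exists>Z\<in>carrier_vec (r * d). transpose_mat (kron_id U d) *\<^sub>v Z = W"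
proof -
  have "\<exists>z. z \<in> carrier_vec r \<and> transpose_mat U *\<^sub>v z = vec m (\<lambda>i. W $ (i * d + k))" if "k < d" for k
    using zero_sum_in_range_transpose[OF m L_dim L_sym L_null U_dim L_U, of "vec m (\<lambda>i. W $ (i * d + k))"]
      W0 that by auto
  then obtain z where z: "\<And>k. k < d \<Longrightarrow> z k \<in> carrier_vec r \<and> transpose_mat U *\<^sub>v z k = vec m (\<lambda>i. W $ (i * d + k))"
    by metis
  define Z where "Z = vec (r * d) (\<lambda>I. z (I mod d) $ (I div d))"
  have Z: "Z \<in> carrier_vec (r * d)" unfolding Z_def by simp
  have "transpose_mat (kron_id U d) *\<^sub>v Z = W"
  proof (rule eq_vecI)
    fix J assume "J < dim_vec W"
    then have J: "J < m * d" using W by simp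
    then have "0 < d" by (cases d) auto
    define i k where "i = J div d" and "k = J mod d"
    have ik: "i < m" "k < d" "J = i * d + k"
      using J \<open>0 < d\<close> unfolding i_def k_def by (auto simp: less_mult_imp_div_less)
    have "(transpose_mat (kron_id U d) *\<^sub>v Z) $ J = (\<Sum>a<r. U $$ (a, i) * Z $ (a * d + k))"
      unfolding transpose_kron_id_index[OF U_dim Z J] i_def k_def ..
    also have "\<dots> = (\<Sum>a<r. U $$ (a, i) * z k $ a)"
      unfolding Z_def using mult_add_div_mod[OF _ ik(2)] by (intro sum.cong refl) auto
    also have "\<dots> = (transpose_mat U *\<^sub>v z k) $ i"
      using U_dim conjunct1[OF z[OF ik(2)]] ik(1) by (simp add: scalar_prod_def row_def atLeast0LessThan)
    also have "\<dots> = W $ J" using z[OF ik(2)] ik by simp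
    finally show "(transpose_mat (kron_id U d) *\<^sub>v Z) $ J = W $ J" .
  qed (use U_dim W in simp)
  then show ?thesis using Z by blast
qed
lemma convex_fun_vec_iff: "convex_fun_vec d F \<longleftrightarrow> vconvex_on (carrier_vec d) F"
  unfolding convex_fun_vec_def vconvex_on_def vcomb_def ..

lemma vconvex_on_block_sum:
  assumes "\<forall>i<m. vconvex_on (carrier_vec (nn i)) (F i)"
  shows "vconvex_on (carrier_vec (\<Sum>i<m. nn i)) (\<lambda>x. \<Sum>i<m. F i (block x (offs nn i) (nn i)))"
  unfolding vconvex_on_def
proof (intro ballI allI impI)
  fix x y :: "real vec" and t :: real
  assume x: "x \<in> carrier_vec (\<Sum>i<m. nn i)" and y: "y \<in> carrier_vec (\<Sum>i<m. nn i)" and t: "0 \<le> t \<and> t \<le> 1"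
  have "(\<Sum>i<m. F i (block (vcomb t x y) (offs nn i) (nn i)))
      \<le> (\<Sum>i<m. t * F i (block x (offs nn i) (nn i)) + (1 - t) * F i (block y (offs nn i) (nn i)))"
    using assms t block_vcomb[OF x y offs_add_le] unfolding vconvex_on_def by (intro sum_mono) auto
  then show "(\<Sum>i<m. F i (block (vcomb t x y) (offs nn i) (nn i)))
      \<le> t * (\<Sum>i<m. F i (block x (offs nn i) (nn i))) + (1 - t) * (\<Sum>i<m. F i (block y (offs nn i) (nn i)))"
    by (simp add: sum.distrib sum_distrib_left)
qed

lemma vaffine_on_block_sum:
  assumes "\<forall>i<m. vaffine_on (carrier_vec (nn i)) (F i)"
  shows "vaffine_on (carrier_vec (\<Sum>i<m. nn i)) (\<lambda>x. \<Sum>i<m. F i (block x (offs nn i) (nn i)))"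
  unfolding vaffine_on_def
proof (intro ballI allI)
  fix x y :: "real vec" and t :: real
  assume x: "x \<in> carrier_vec (\<Sum>i<m. nn i)" and y: "y \<in> carrier_vec (\<Sum>i<m. nn i)"
  have "(\<Sum>i<m. F i (block (vcomb t x y) (offs nn i) (nn i)))
      = (\<Sum>i<m. t * F i (block x (offs nn i) (nn i)) + (1 - t) * F i (block y (offs nn i) (nn i)))"
    using assms block_vcomb[OF x y offs_add_le] unfolding vaffine_on_def by (intro sum.cong) auto
  then show "(\<Sum>i<m. F i (block (vcomb t x y) (offs nn i) (nn i)))
      = t * (\<Sum>i<m. F i (block x (offs nn i) (nn i))) + (1 - t) * (\<Sum>i<m. F i (block y (offs nn i) (nn i)))"
    by (simp add: sum.distrib sum_distrib_left)
qed

lemma vaffine_on_inner_minus: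
  assumes "a \<in> carrier_vec d"
  shows "vaffine_on (carrier_vec d) (\<lambda>u. a \<bullet> u - c)"
  unfolding vaffine_on_def vcomb_def using assms
  by (auto simp: scalar_prod_add_distrib[of _ d] scalar_prod_smult_distrib[of _ d] algebra_simps)
lemma sum_ereal_eq_MInfty:
  fixes f :: "'a \<Rightarrow> ereal"
  assumes "finite I" "\<forall>i\<in>I. f i \<noteq> \<infinity>" "\<exists>i\<in>I. f i = -\<infinity>"
  shows "sum f I = -\<infinity>"
  using assms
proof (induction I rule: finite_induct)
  case (insert a I)
  have "sum f I \<noteq> \<infinity>" using insert.prems(1) insert.hyps(1) by (simp add: sum_Pinfty)
  then show ?case using insert by (cases "f a = -\<infinity>") auto
qed simp

lemma sum_ereal_finite_imp_finite:
  fixes f :: "'a \<Rightarrow> ereal"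
  assumes "finite I" "\<bar>sum f I\<bar> \<noteq> \<infinity>" "i \<in> I"
  shows "\<bar>f i\<bar> \<noteq> \<infinity>"
proof
  assume "\<bar>f i\<bar> = \<infinity>"
  show False
  proof (cases "\<exists>k\<in>I. f k = \<infinity>")
    case True
    then have "sum f I = \<infinity>" using assms(1) sum_Pinfty[of f I] by blast
    then show False using assms(2) by simp
  next
    case False
    then have "f i = -\<infinity>" using \<open>\<bar>f i\<bar> = \<infinity>\<close> assms(3) by (cases "f i") auto
    then have "sum f I = -\<infinity>" using sum_ereal_eq_MInfty[OF assms(1)] False assms(3) by blast
    then show False using assms(2) by simp
  qed
qed

lemma Kpolar_carrier: "y \<in> Kpolar p q \<Longrightarrow> y \<in> carrier_vec (p+q)"
  unfolding Kpolar_def by auto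

lemma Kpolar_inner_Kcone_nonpos:
  assumes u: "u \<in> Kcone p q" and y: "y \<in> Kpolar p q"
  shows "y \<bullet> u \<le> 0"
proof -
  have "y $ k * u $ k \<le> 0" if "k < p + q" for k
    using u y that unfolding Kcone_def Kpolar_def by (cases "k < p") (auto simp: mult_nonneg_nonpos)
  then have "(\<Sum>k\<in>{0..<p+q}. y $ k * u $ k) \<le> 0" by (intro sum_nonpos) auto
  moreover have "dim_vec u = p + q" using u unfolding Kcone_def by auto
  ultimately show ?thesis unfolding scalar_prod_def by simp
qed

lemma Kcone_if_Kpolar_inner_nonpos:
  assumes u: "u \<in> carrier_vec (p+q)" and nonpos: "\<forall>y\<in>Kpolar p q. y \<bullet> u \<le> 0"
  shows "u \<in> Kcone p q"
proof -
  have e: "c \<cdot>\<^sub>v unit_vec (p+q) j \<in> Kpolar p q" if "j < p+q" "j < p \<or> 0 \<le> c" for j c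
    unfolding Kpolar_def using that by (auto simp: unit_vec_def)
  have e_inner: "(c \<cdot>\<^sub>v unit_vec (p+q) j) \<bullet> u = c * u $ j" if "j < p+q" for j c
    using u that by (simp add: smult_scalar_prod_distrib[of _ "p+q"] scalar_prod_left_unit)
  have "u $ j = 0" if j: "j < p" for j
  proof -
    have "1 * u $ j \<le> 0" using nonpos e[of j 1] e_inner[of j 1] j by force
    moreover have "-1 * u $ j \<le> 0" using nonpos e[of j "-1"] e_inner[of j "-1"] j by force
    ultimately show ?thesis by simp
  qed
  moreover have "u $ j \<le> 0" if "p \<le> j" "j < p + q" for j
    using nonpos e[of j 1] e_inner[of j 1] that by force
  ultimately show ?thesis unfolding Kcone_def using u by auto
qed

lemma Kpolar_argmax_imp:
  assumes u: "u \<in> carrier_vec (p+q)" and y: "y \<in> Kpolar p q"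
    and max: "\<forall>y'\<in>Kpolar p q. y' \<bullet> u \<le> y \<bullet> u"
  shows "u \<in> Kcone p q" "y \<bullet> u = 0"
proof -
  have "0\<^sub>v (p+q) \<in> Kpolar p q" "2 \<cdot>\<^sub>v y \<in> Kpolar p q" using y unfolding Kpolar_def by auto
  then have "0 \<le> y \<bullet> u" "2 * (y \<bullet> u) \<le> y \<bullet> u"
    using max u Kpolar_carrier[OF y] by (auto simp: smult_scalar_prod_distrib[of _ "p+q"])
  then show yu: "y \<bullet> u = 0" by simp
  show "u \<in> Kcone p q" using max unfolding yu by (intro Kcone_if_Kpolar_inner_nonpos[OF u]) simp
qed

lemma lagr_i_eq: "xi \<in> \<Omega> i \<Longrightarrow> y \<in> Kpolar p q \<Longrightarrow>
    lagr_i p q f A b g \<Omega> i xi y = ereal (f i xi + y \<bullet> Gfun A b g i xi)"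
  unfolding lagr_i_def indic_def by (simp add: zero_ereal_def)

lemma lagr_i_PInfty: "xi \<notin> \<Omega> i \<Longrightarrow> lagr_i p q f A b g \<Omega> i xi y = \<infinity>"
  unfolding lagr_i_def indic_def by (cases "y \<in> Kpolar p q") (auto simp: zero_ereal_def)

lemma lagr_i_MInfty: "xi \<in> \<Omega> i \<Longrightarrow> y \<notin> Kpolar p q \<Longrightarrow> lagr_i p q f A b g \<Omega> i xi y = -\<infinity>"
  unfolding lagr_i_def indic_def by (simp add: zero_ereal_def)

lemma Gfun_carrier:
  assumes "b i \<in> carrier_vec p" "g i xi \<in> carrier_vec q"
  shows "Gfun A b g i xi \<in> carrier_vec (p+q)"
  using assms unfolding Gfun_def carrier_vec_def by simp

lemma Gfun_index_affine:
  assumes "A i \<in> carrier_mat p n" "b i \<in> carrier_vec p" "g i xi \<in> carrier_vec q" "xi \<in> carrier_vec n" "j < p"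
  shows "Gfun A b g i xi $ j = row (A i) j \<bullet> xi - b i $ j"
  using assms unfolding Gfun_def by (auto simp: index_append_vec)

lemma Gfun_index_nonlinear:
  assumes "A i \<in> carrier_mat p n" "b i \<in> carrier_vec p" "g i xi \<in> carrier_vec q" "xi \<in> carrier_vec n"
    "p \<le> j" "j < p + q"
  shows "Gfun A b g i xi $ j = g i xi $ (j - p)"
  using assms unfolding Gfun_def by (auto simp: index_append_vec)
lemma deviation_inner_ge:
  fixes a yy :: "nat \<Rightarrow> nat \<Rightarrow> real" and y \<gamma> :: "nat \<Rightarrow> real"
  assumes m: "0 < m" and \<gamma>: "\<forall>k<d. \<gamma> k = (\<Sum>i<m. a i k)" and y\<gamma>: "(\<Sum>k<d. y k * \<gamma> k) = 0"
    and yy\<gamma>: "\<forall>i<m. (\<Sum>k<d. yy i k * \<gamma> k) \<le> 0"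
  shows "(\<Sum>i<m. \<Sum>k<d. yy i k * a i k) \<le> (\<Sum>i<m. \<Sum>k<d. (a i k - \<gamma> k / m) * (yy i k - y k))"
proof -
  have "(a i k - \<gamma> k / m) * (yy i k - y k) =
      yy i k * a i k - a i k * y k - (1 / m) * (yy i k * \<gamma> k) + (1 / m) * (y k * \<gamma> k)" for i k
    by (simp add: algebra_simps)
  then have split: "(\<Sum>i<m. \<Sum>k<d. (a i k - \<gamma> k / m) * (yy i k - y k)) =
      (\<Sum>i<m. \<Sum>k<d. yy i k * a i k) - (\<Sum>i<m. \<Sum>k<d. a i k * y k)
      - (1 / m) * (\<Sum>i<m. \<Sum>k<d. yy i k * \<gamma> k) + (\<Sum>i<m. (1 / m) * (\<Sum>k<d. y k * \<gamma> k))"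
    by (simp add: sum.distrib sum_subtractf sum_distrib_left)
  have "(\<Sum>i<m. \<Sum>k<d. a i k * y k) = (\<Sum>k<d. \<Sum>i<m. a i k * y k)" by (rule sum.swap)
  also have "\<dots> = (\<Sum>k<d. y k * \<gamma> k)" using \<gamma> by (simp add: sum_distrib_left mult.commute)
  finally have "(\<Sum>i<m. \<Sum>k<d. a i k * y k) = (\<Sum>k<d. y k * \<gamma> k)" .
  moreover have "(\<Sum>i<m. \<Sum>k<d. yy i k * \<gamma> k) \<le> 0" by (rule sum_nonpos) (use yy\<gamma> in simp)
  then have "0 \<le> - (1 / real m) * (\<Sum>i<m. \<Sum>k<d. yy i k * \<gamma> k)"
    using m by (intro mult_nonpos_nonpos) auto
  ultimately show ?thesis unfolding split using y\<gamma> by simp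
qed

locale dist_problem =
  fixes m :: nat and nn :: "nat \<Rightarrow> nat" and p q :: nat
    and f :: "nat \<Rightarrow> real vec \<Rightarrow> real" and A :: "nat \<Rightarrow> real mat" and b :: "nat \<Rightarrow> real vec"
    and g :: "nat \<Rightarrow> real vec \<Rightarrow> real vec" and \<Omega> :: "nat \<Rightarrow> real vec set"
  assumes m_pos: "0 < m"
    and A_dim: "\<forall>i<m. A i \<in> carrier_mat p (nn i)" and b_dim: "\<forall>i<m. b i \<in> carrier_vec p"
    and g_dim: "\<forall>i<m. \<forall>xi\<in>carrier_vec (nn i). g i xi \<in> carrier_vec q"
begin

abbreviation n :: nat where "n \<equiv> \<Sum>i<m. nn i"

abbreviation blk :: "real vec \<Rightarrow> nat \<Rightarrow> real vec" where
  "blk x i \<equiv> block x (offs nn i) (nn i)"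

abbreviation yblk :: "real vec \<Rightarrow> nat \<Rightarrow> real vec" where
  "yblk Y i \<equiv> block Y (i * (p+q)) (p+q)"

abbreviation G :: "real vec \<Rightarrow> real vec" where
  "G x \<equiv> sumv (p+q) (\<lambda>i. Gfun A b g i (blk x i)) {..<m}"

abbreviation \<Omega>prod :: "real vec set" where
  "\<Omega>prod \<equiv> {x \<in> carrier_vec n. \<forall>i<m. blk x i \<in> \<Omega> i}"

abbreviation obj :: "real vec \<Rightarrow> real" where "obj \<equiv> objP m nn f"
abbreviation li where "li \<equiv> lagr_i p q f A b g \<Omega>"
abbreviation Lag where "Lag \<equiv> Lagr m nn p q f A b g \<Omega>"
abbreviation dual where "dual \<equiv> dualfun m nn p q f A b g \<Omega>"

lemma Gfun_blk_carrier: "i < m \<Longrightarrow> Gfun A b g i (blk x i) \<in> carrier_vec (p+q)"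
  using Gfun_carrier b_dim g_dim by auto

lemma G_index: "j < p+q \<Longrightarrow> G x $ j = (\<Sum>i<m. Gfun A b g i (blk x i) $ j)"
  by (simp add: sumv_index)

lemma inner_G: "y \<bullet> G x = (\<Sum>i<m. y \<bullet> Gfun A b g i (blk x i))"
proof -
  have "y \<bullet> G x = (\<Sum>j\<in>{0..<p+q}. y $ j * (\<Sum>i<m. Gfun A b g i (blk x i) $ j))"
    unfolding scalar_prod_def by (simp add: sumv_index)
  also have "\<dots> = (\<Sum>i<m. \<Sum>j\<in>{0..<p+q}. y $ j * Gfun A b g i (blk x i) $ j)"
    by (simp add: sum_distrib_left sum.swap[of _ "{0..<p+q}"])
  also have "\<dots> = (\<Sum>i<m. y \<bullet> Gfun A b g i (blk x i))"
    unfolding scalar_prod_def using carrier_vecD[OF Gfun_blk_carrier] by (intro sum.cong) auto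
  finally show ?thesis .
qed

lemma obj_plus_inner_G:
  "obj z + y \<bullet> G z = (\<Sum>i<m. f i (blk z i) + y \<bullet> Gfun A b g i (blk z i))"
  unfolding objP_def inner_G by (simp add: sum.distrib)

lemma feasibleP_iff: "feasibleP m nn p q A b g \<Omega> x \<longleftrightarrow> x \<in> \<Omega>prod \<and> G x \<in> Kcone p q"
  unfolding feasibleP_def by auto

lemma Lag_MInfty_if_yblk_notin_Kpolar:
  assumes x: "x \<in> \<Omega>prod" and i0: "i0 < m" "yblk Y i0 \<notin> Kpolar p q"
  shows "Lag x Y = -\<infinity>"
  unfolding Lagr_def
proof (rule sum_ereal_eq_MInfty)
  show "\<forall>i\<in>{..<m}. li i (blk x i) (yblk Y i) \<noteq> \<infinity>"
  proof
    fix i assume "i \<in> {..<m}"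
    then have "blk x i \<in> \<Omega> i" using x by auto
    then show "li i (blk x i) (yblk Y i) \<noteq> \<infinity>"
      by (cases "yblk Y i \<in> Kpolar p q") (simp_all add: lagr_i_eq lagr_i_MInfty)
  qed
  show "\<exists>i\<in>{..<m}. li i (blk x i) (yblk Y i) = -\<infinity>"
    using i0 x lagr_i_MInfty by blast
qed simp

lemma Lag_eq_if_yblks_in_Kpolar:
  assumes "x \<in> \<Omega>prod" "\<forall>i<m. yblk Y i \<in> Kpolar p q"
  shows "Lag x Y = ereal (\<Sum>i<m. f i (blk x i) + yblk Y i \<bullet> Gfun A b g i (blk x i))"
  unfolding Lagr_def using assms lagr_i_eq by simp

lemma Lag_consensus: "y \<in> carrier_vec (p+q) \<Longrightarrow> Lag x (consensus m y) = (\<Sum>i<m. li i (blk x i) y)"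
  unfolding Lagr_def using consensus_block by simp

lemma Lag_consensus_eq:
  assumes "x \<in> \<Omega>prod" "y \<in> Kpolar p q"
  shows "Lag x (consensus m y) = ereal (obj x + y \<bullet> G x)"
  using Lag_eq_if_yblks_in_Kpolar[OF assms(1)] consensus_block Kpolar_carrier[OF assms(2)]
    obj_plus_inner_G assms(2) by simp

lemma Lag_consensus_MInfty:
  assumes "x \<in> \<Omega>prod" "y \<in> carrier_vec (p+q)" "y \<notin> Kpolar p q"
  shows "Lag x (consensus m y) = -\<infinity>"
  using Lag_MInfty_if_yblk_notin_Kpolar[OF assms(1) m_pos] consensus_block[OF m_pos assms(2)] assms(3)
  by simp

lemma dual_le_Lag: "y \<in> carrier_vec (p+q) \<Longrightarrow> dual y \<le> Lag x (consensus m y)"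
  unfolding dualfun_def Lag_consensus by (intro sum_mono INF_lower) simp

lemma weak_duality:
  assumes "feasibleP m nn p q A b g \<Omega> x" "y \<in> carrier_vec (p+q)"
  shows "dual y \<le> ereal (obj x)"
proof -
  have x: "x \<in> \<Omega>prod" "G x \<in> Kcone p q" using assms(1) feasibleP_iff by auto
  have "dual y \<le> Lag x (consensus m y)" by (rule dual_le_Lag[OF assms(2)])
  also have "\<dots> \<le> ereal (obj x)"
  proof (cases "y \<in> Kpolar p q")
    case True
    then show ?thesis
      using Lag_consensus_eq[OF x(1) True] Kpolar_inner_Kcone_nonpos[OF x(2) True] by simp
  next
    case False
    then show ?thesis using Lag_consensus_MInfty[OF x(1) assms(2)] by simp
  qed
  finally show ?thesis .
qed

lemma lagr_i_blockwise_min: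
  assumes x: "x \<in> \<Omega>prod" and y: "y \<in> Kpolar p q"
    and min: "\<forall>z\<in>\<Omega>prod. obj x + y \<bullet> G x \<le> obj z + y \<bullet> G z"
    and i: "i < m" and xi: "xi \<in> carrier_vec (nn i)"
  shows "li i (blk x i) y \<le> li i xi y"
proof (cases "xi \<in> \<Omega> i")
  case False
  then show ?thesis by (simp add: lagr_i_PInfty)
next
  case True
  define h where "h j u = f j u + y \<bullet> Gfun A b g j u" for j u
  obtain z where z: "z \<in> carrier_vec n" "blk z i = xi" "\<forall>j<m. j \<noteq> i \<longrightarrow> blk z j = blk x j"
    using exists_block_update[of x nn m i xi] x i xi by auto
  then have "z \<in> \<Omega>prod" using x True by auto
  then have "(\<Sum>j<m. h j (blk x j)) \<le> (\<Sum>j<m. h j (blk z j))"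
    using min obj_plus_inner_G unfolding h_def by auto
  moreover have "(\<Sum>j<m. h j (blk w j)) = h i (blk w i) + (\<Sum>j\<in>{..<m} - {i}. h j (blk w j))" for w
    using i by (simp add: sum.remove)
  moreover have "(\<Sum>j\<in>{..<m} - {i}. h j (blk z j)) = (\<Sum>j\<in>{..<m} - {i}. h j (blk x j))"
    using z(3) by (intro sum.cong) auto
  ultimately have "h i (blk x i) \<le> h i xi" using z(2) by simp
  then show ?thesis using lagr_i_eq[OF _ y] x i True unfolding h_def by simp
qed

lemma dual_eq_at_minimiser:
  assumes x: "x \<in> \<Omega>prod" and y: "y \<in> Kpolar p q"
    and min: "\<forall>z\<in>\<Omega>prod. obj x + y \<bullet> G x \<le> obj z + y \<bullet> G z"
  shows "dual y = ereal (obj x + y \<bullet> G x)"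
proof -
  have "(INF xi\<in>carrier_vec (nn i). li i xi y) = li i (blk x i) y" if "i < m" for i
    using lagr_i_blockwise_min[OF x y min that]
    by (intro antisym INF_lower INF_greatest) auto
  then have "dual y = Lag x (consensus m y)"
    unfolding dualfun_def Lag_consensus[OF Kpolar_carrier[OF y]] by simp
  then show ?thesis using Lag_consensus_eq[OF x y] by simp
qed

lemma Lag_min_at_minimiser:
  assumes x: "x \<in> \<Omega>prod" and y: "y \<in> Kpolar p q"
    and min: "\<forall>z\<in>\<Omega>prod. obj x + y \<bullet> G x \<le> obj z + y \<bullet> G z"
    and z: "z \<in> carrier_vec n"
  shows "Lag x (consensus m y) \<le> Lag z (consensus m y)"
proof (cases "z \<in> \<Omega>prod")
  case True
  then show ?thesis using Lag_consensus_eq[OF x y] Lag_consensus_eq[OF _ y] min by simp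
next
  case False
  then obtain i where "i < m" "blk z i \<notin> \<Omega> i" using z by auto
  then have "Lag z (consensus m y) = \<infinity>"
    unfolding Lag_consensus[OF Kpolar_carrier[OF y]] sum_Pinfty using lagr_i_PInfty by blast
  then show ?thesis by simp
qed

definition kkt :: "real vec \<Rightarrow> real vec \<Rightarrow> bool" where
  "kkt x y \<longleftrightarrow> x \<in> \<Omega>prod \<and> G x \<in> Kcone p q \<and> y \<in> Kpolar p q \<and> y \<bullet> G x = 0 \<and>
     (\<forall>z\<in>\<Omega>prod. obj x \<le> obj z + y \<bullet> G z)"

lemma kkt_imp_optimal:
  assumes "kkt x y"
  shows "optimalP m nn p q f A b g \<Omega> x" "optimalD m nn p q f A b g \<Omega> y"
proof -
  have x: "x \<in> \<Omega>prod" "G x \<in> Kcone p q" and y: "y \<in> Kpolar p q" and yG: "y \<bullet> G x = 0"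
    and min: "\<forall>z\<in>\<Omega>prod. obj x \<le> obj z + y \<bullet> G z"
    using assms unfolding kkt_def by auto
  have "obj x \<le> obj z" if "feasibleP m nn p q A b g \<Omega> z" for z
  proof -
    have "z \<in> \<Omega>prod" "G z \<in> Kcone p q" using that feasibleP_iff by auto
    then show ?thesis using min Kpolar_inner_Kcone_nonpos[OF _ y] by force
  qed
  then show "optimalP m nn p q f A b g \<Omega> x"
    unfolding optimalP_def using x feasibleP_iff by blast
  have "dual y = ereal (obj x)" using dual_eq_at_minimiser[OF x(1) y] min yG by simp
  then show "optimalD m nn p q f A b g \<Omega> y"
    unfolding optimalD_def using Kpolar_carrier[OF y] weak_duality x feasibleP_iff by simp
qed

text \<open>The \<open>Y\<close>-component of \<open>\<Phi>\<close> is solved by \<open>(U \<otimes> I)\<^sup>T Z = Gdev x\<close>, whose block \<open>i\<close> is the deviation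
  \<open>G\<^sub>i(x\<^sub>i) - G(x) / m\<close> of agent \<open>i\<close>'s constraint value from the average.  Its block sums vanish,
  so such a \<open>Z\<close> exists.\<close>
definition Gdev :: "real vec \<Rightarrow> real vec" where
  "Gdev x = vec (m * (p+q)) (\<lambda>J. Gfun A b g (J div (p+q)) (blk x (J div (p+q))) $ (J mod (p+q))
                                  - G x $ (J mod (p+q)) / m)"

lemma Gdev_carrier: "Gdev x \<in> carrier_vec (m * (p+q))"
  unfolding Gdev_def by simp

lemma Gdev_index:
  assumes "i < m" "k < p+q"
  shows "Gdev x $ (i * (p+q) + k) = Gfun A b g i (blk x i) $ k - G x $ k / m"
  unfolding Gdev_def using mult_add_div_mod[OF assms] by simp

lemma Gdev_block_sums: "\<forall>k<p+q. (\<Sum>i<m. Gdev x $ (i * (p+q) + k)) = 0"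
  using m_pos by (simp add: Gdev_index G_index sum_subtractf)

lemma inner_yblks_le_Gdev_inner:
  assumes gK: "G x \<in> Kcone p q" and y: "y \<in> Kpolar p q" and yG: "y \<bullet> G x = 0"
    and Y': "Y' \<in> carrier_vec (m * (p+q))" and Y'K: "\<forall>i<m. yblk Y' i \<in> Kpolar p q"
  shows "(\<Sum>i<m. yblk Y' i \<bullet> Gfun A b g i (blk x i)) \<le> Gdev x \<bullet> (Y' - consensus m y)"
proof -
  define a where "a i k = Gfun A b g i (blk x i) $ k" for i k
  define \<gamma> where "\<gamma> k = G x $ k" for k
  define yy where "yy i k = Y' $ (i * (p+q) + k)" for i k
  have yc: "y \<in> carrier_vec (p+q)" using Kpolar_carrier[OF y] .
  have inner_blk: "yblk Y' i \<bullet> v = (\<Sum>k<p+q. yy i k * v $ k)" if "v \<in> carrier_vec (p+q)" for i v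
    using that unfolding scalar_prod_def yy_def by (simp add: atLeast0LessThan)
  have "Gdev x \<bullet> (Y' - consensus m y) = (\<Sum>J<m*(p+q). Gdev x $ J * (Y' $ J - consensus m y $ J))"
    using Y' yc unfolding scalar_prod_def by (simp add: atLeast0LessThan)
  also have "\<dots> = (\<Sum>i<m. \<Sum>k<p+q. (a i k - \<gamma> k / m) * (yy i k - y $ k))"
    unfolding sum_mult_split using Gdev_index consensus_index[of _ m _ y] yc
    unfolding a_def \<gamma>_def yy_def by (intro sum.cong refl) auto
  finally have Gdev_inner: "Gdev x \<bullet> (Y' - consensus m y) = \<dots>" .
  have "(\<Sum>i<m. \<Sum>k<p+q. yy i k * a i k) \<le> (\<Sum>i<m. \<Sum>k<p+q. (a i k - \<gamma> k / m) * (yy i k - y $ k))"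
  proof (rule deviation_inner_ge[OF m_pos])
    show "\<forall>k<p+q. \<gamma> k = (\<Sum>i<m. a i k)" unfolding \<gamma>_def a_def by (simp add: G_index)
    show "(\<Sum>k<p+q. y $ k * \<gamma> k) = 0"
      using yG yc unfolding scalar_prod_def \<gamma>_def by (simp add: atLeast0LessThan)
    show "\<forall>i<m. (\<Sum>k<p+q. yy i k * \<gamma> k) \<le> 0"
    proof (intro allI impI)
      fix i assume "i < m"
      then have "yblk Y' i \<bullet> G x \<le> 0" using Kpolar_inner_Kcone_nonpos[OF gK] Y'K by blast
      then show "(\<Sum>k<p+q. yy i k * \<gamma> k) \<le> 0" using inner_blk[of "G x"] unfolding \<gamma>_def by simp
    qed
  qed
  then show ?thesis
    unfolding Gdev_inner using inner_blk Gfun_blk_carrier unfolding a_def by simp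
qed

lemma neg_Gdev_subgradient:
  assumes x: "x \<in> \<Omega>prod" "G x \<in> Kcone p q" and y: "y \<in> Kpolar p q" and yG: "y \<bullet> G x = 0"
  shows "- Gdev x \<in> subdiff (m * (p+q)) (\<lambda>Y'. - Lag x Y') (consensus m y)"
proof -
  have LY: "Lag x (consensus m y) = ereal (obj x)" using Lag_consensus_eq[OF x(1) y] yG by simp
  have "- Lag x (consensus m y) + ereal ((- Gdev x) \<bullet> (Y' - consensus m y)) \<le> - Lag x Y'"
    if Y': "Y' \<in> carrier_vec (m * (p+q))" for Y'
  proof (cases "\<forall>i<m. yblk Y' i \<in> Kpolar p q")
    case True
    have "dim_vec (Gdev x) = dim_vec (Y' - consensus m y)"
      using carrier_vecD[OF Y'] carrier_vecD[OF Gdev_carrier] Kpolar_carrier[OF y] by simp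
    then show ?thesis
      using inner_yblks_le_Gdev_inner[OF x(2) y yG Y' True] Lag_eq_if_yblks_in_Kpolar[OF x(1) True] LY
      by (simp add: objP_def sum.distrib)
  next
    case False
    then show ?thesis using Lag_MInfty_if_yblk_notin_Kpolar[OF x(1)] by auto
  qed
  then show ?thesis unfolding subdiff_def using LY Gdev_carrier by simp
qed

lemma zero_in_Phi_iff:
  assumes U: "U \<in> carrier_mat r m" and Z: "Z \<in> carrier_vec (r * (p+q))"
  shows "(0\<^sub>v n, 0\<^sub>v (m * (p+q)), 0\<^sub>v (r * (p+q))) \<in> Phi m nn p q f A b g \<Omega> U x Y Z \<longleftrightarrow>
    0\<^sub>v n \<in> subdiff n (\<lambda>x'. Lag x' Y) x \<and>
    - (transpose_mat (kron_id U (p+q)) *\<^sub>v Z) \<in> subdiff (m * (p+q)) (\<lambda>Y'. - Lag x Y') Y \<and>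
    kron_id U (p+q) *\<^sub>v Y = 0\<^sub>v (r * (p+q))"
proof -
  let ?T = "transpose_mat (kron_id U (p+q)) *\<^sub>v Z"
  let ?S = "subdiff (m * (p+q)) (\<lambda>Y'. - Lag x Y') Y"
  have T: "?T \<in> carrier_vec (m * (p+q))"
    using kron_id_carrier[OF U] Z by (metis mult_mat_vec_carrier transpose_carrier_mat)
  have S: "?S \<subseteq> carrier_vec (m * (p+q))" unfolding subdiff_def by auto
  have "(\<exists>w. 0\<^sub>v (m * (p+q)) = - w + ?T \<and> w \<in> uminus ` ?S) \<longleftrightarrow> - ?T \<in> ?S"
  proof
    assume "\<exists>w. 0\<^sub>v (m * (p+q)) = - w + ?T \<and> w \<in> uminus ` ?S"
    then obtain v where v: "v \<in> ?S" "0\<^sub>v (m * (p+q)) = v + ?T" by auto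
    have v_dim: "dim_vec v = m * (p+q)" using v(1) S by auto
    have "v $ i = - ?T $ i" if "i < m * (p+q)" for i
    proof -
      have "0\<^sub>v (m * (p+q)) $ i = (v + ?T) $ i" using v(2) by simp
      then show ?thesis using that carrier_vecD[OF T] carrier_matD[OF U] by simp
    qed
    then have "v = - ?T" using v_dim carrier_vecD[OF T] by (intro eq_vecI) auto
    then show "- ?T \<in> ?S" using v by simp
  next
    assume "- ?T \<in> ?S"
    then show "\<exists>w. 0\<^sub>v (m * (p+q)) = - w + ?T \<and> w \<in> uminus ` ?S"
      using T by (intro exI[of _ ?T]) (auto intro: image_eqI[of _ _ "- ?T"])
  qed
  moreover have "0\<^sub>v (r * (p+q)) = - (kron_id U (p+q) *\<^sub>v Y) \<longleftrightarrow> kron_id U (p+q) *\<^sub>v Y = 0\<^sub>v (r * (p+q))"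
    by (metis uminus_uminus_vec uminus_zero_vec)
  ultimately show ?thesis unfolding Phi_def Let_def by auto
qed

lemma kkt_imp_Phi:
  fixes L U :: "real mat"
  assumes L_dim: "L \<in> carrier_mat m m" and L_sym: "transpose_mat L = L"
    and L_null: "{v \<in> carrier_vec m. L *\<^sub>v v = 0\<^sub>v m} = {c \<cdot>\<^sub>v ones_vec m | c. True}"
    and U_dim: "U \<in> carrier_mat r m" and L_U: "L = transpose_mat U * U"
    and U_one: "U *\<^sub>v ones_vec m = 0\<^sub>v r"
    and kkt: "kkt x y"
  shows "\<exists>Z\<in>carrier_vec (r * (p+q)).
    (0\<^sub>v n, 0\<^sub>v (m * (p+q)), 0\<^sub>v (r * (p+q))) \<in> Phi m nn p q f A b g \<Omega> U x (consensus m y) Z"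
proof -
  have x: "x \<in> \<Omega>prod" "G x \<in> Kcone p q" and y: "y \<in> Kpolar p q" and yG: "y \<bullet> G x = 0"
    and min: "\<forall>z\<in>\<Omega>prod. obj x + y \<bullet> G x \<le> obj z + y \<bullet> G z"
    using kkt unfolding kkt_def by auto
  have "0\<^sub>v n \<in> subdiff n (\<lambda>x'. Lag x' (consensus m y)) x"
    using Lag_min_at_minimiser[OF x(1) y min] Lag_consensus_eq[OF x(1) y] x(1)
    unfolding subdiff_def by auto
  moreover obtain Z where Z: "Z \<in> carrier_vec (r * (p+q))"
    and Z_Gdev: "transpose_mat (kron_id U (p+q)) *\<^sub>v Z = Gdev x"
    using zero_block_sums_in_range_transpose_kron_id[OF m_pos L_dim L_sym L_null U_dim L_U
        Gdev_carrier Gdev_block_sums] by blast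
  moreover have "- (transpose_mat (kron_id U (p+q)) *\<^sub>v Z) \<in> subdiff (m * (p+q)) (\<lambda>Y'. - Lag x Y') (consensus m y)"
    unfolding Z_Gdev by (rule neg_Gdev_subgradient[OF x y yG])
  moreover have "kron_id U (p+q) *\<^sub>v consensus m y = 0\<^sub>v (r * (p+q))"
    using kron_id_mult_consensus[OF U_dim U_one Kpolar_carrier[OF y]] .
  ultimately have "(0\<^sub>v n, 0\<^sub>v (m * (p+q)), 0\<^sub>v (r * (p+q))) \<in> Phi m nn p q f A b g \<Omega> U x (consensus m y) Z"
    using zero_in_Phi_iff[OF U_dim Z] by simp
  then show ?thesis using Z by blast
qed

lemma primal_of_zero_x_subgradient:
  assumes x: "x \<in> carrier_vec n" and y: "y \<in> carrier_vec (p+q)"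
    and x0: "0\<^sub>v n \<in> subdiff n (\<lambda>x'. Lag x' (consensus m y)) x"
  shows "x \<in> \<Omega>prod" "y \<in> Kpolar p q" "\<forall>z\<in>\<Omega>prod. obj x + y \<bullet> G x \<le> obj z + y \<bullet> G z"
proof -
  have fin: "\<bar>Lag x (consensus m y)\<bar> \<noteq> \<infinity>"
    and min: "\<forall>z\<in>carrier_vec n. Lag x (consensus m y) \<le> Lag z (consensus m y)"
    using x0 x unfolding subdiff_def by auto
  have fin_i: "\<bar>li i (blk x i) y\<bar> \<noteq> \<infinity>" if "i < m" for i
    using sum_ereal_finite_imp_finite[of "{..<m}"] fin that unfolding Lag_consensus[OF y] by simp
  have "blk x i \<in> \<Omega> i" if "i < m" for i
  proof (rule ccontr)
    assume "blk x i \<notin> \<Omega> i"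
    then show False using fin_i[OF that] by (simp add: lagr_i_PInfty)
  qed
  then show x\<Omega>: "x \<in> \<Omega>prod" using x by auto
  show yK: "y \<in> Kpolar p q"
  proof (rule ccontr)
    assume "y \<notin> Kpolar p q"
    then show False using fin_i[OF m_pos] x\<Omega> m_pos by (simp add: lagr_i_MInfty)
  qed
  show "\<forall>z\<in>\<Omega>prod. obj x + y \<bullet> G x \<le> obj z + y \<bullet> G z"
    using min Lag_consensus_eq[OF x\<Omega> yK] Lag_consensus_eq[OF _ yK] by auto
qed

lemma dual_of_consensus_subgradient:
  assumes x: "x \<in> \<Omega>prod" and y: "y \<in> Kpolar p q"
    and v: "v \<in> subdiff (m * (p+q)) (\<lambda>Y'. - Lag x Y') (consensus m y)"
    and orth: "\<forall>w\<in>carrier_vec (p+q). v \<bullet> consensus m w = 0"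
    and y': "y' \<in> Kpolar p q"
  shows "y' \<bullet> G x \<le> y \<bullet> G x"
proof -
  have yc: "y \<in> carrier_vec (p+q)" and y'c: "y' \<in> carrier_vec (p+q)"
    using y y' by (auto intro: Kpolar_carrier)
  have "consensus m y' \<in> carrier_vec (m * (p+q))" using y'c by (rule consensus_carrier)
  then have "- Lag x (consensus m y) + ereal (v \<bullet> consensus m (y' - y)) \<le> - Lag x (consensus m y')"
    using v consensus_diff[OF yc y'c] unfolding subdiff_def by auto
  then show ?thesis using orth yc y'c Lag_consensus_eq[OF x y] Lag_consensus_eq[OF x y'] by simp
qed

lemma Phi_imp_kkt:
  assumes U_dim: "U \<in> carrier_mat r m" and U_one: "U *\<^sub>v ones_vec m = 0\<^sub>v r"
    and Z: "Z \<in> carrier_vec (r * (p+q))" and x: "x \<in> carrier_vec n" and y: "y \<in> carrier_vec (p+q)"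
    and Phi: "(0\<^sub>v n, 0\<^sub>v (m * (p+q)), 0\<^sub>v (r * (p+q))) \<in> Phi m nn p q f A b g \<Omega> U x (consensus m y) Z"
  shows "kkt x y"
proof -
  let ?v = "- (transpose_mat (kron_id U (p+q)) *\<^sub>v Z)"
  have x0: "0\<^sub>v n \<in> subdiff n (\<lambda>x'. Lag x' (consensus m y)) x"
    and v: "?v \<in> subdiff (m * (p+q)) (\<lambda>Y'. - Lag x Y') (consensus m y)"
    using Phi zero_in_Phi_iff[OF U_dim Z] by auto
  note primal = primal_of_zero_x_subgradient[OF x y x0]
  have "\<forall>w\<in>carrier_vec (p+q). ?v \<bullet> consensus m w = 0"
  proof
    fix w :: "real vec" assume w: "w \<in> carrier_vec (p+q)"
    have "dim_vec (transpose_mat (kron_id U (p+q)) *\<^sub>v Z) = dim_vec (consensus m w)"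
      using carrier_matD[OF U_dim] carrier_vecD[OF w] by simp
    then show "?v \<bullet> consensus m w = 0" using transpose_kron_id_inner_consensus[OF U_dim U_one Z w] by simp
  qed
  then have "\<forall>y'\<in>Kpolar p q. y' \<bullet> G x \<le> y \<bullet> G x"
    using dual_of_consensus_subgradient[OF primal(1,2) v] by blast
  then have "G x \<in> Kcone p q" "y \<bullet> G x = 0" using Kpolar_argmax_imp[OF _ primal(2)] by auto
  then show ?thesis unfolding kkt_def using primal by simp
qed

end

locale convex_problem = dist_problem +
  assumes f_cvx: "\<forall>i<m. convex_fun_vec (nn i) (f i)"
    and g_cvx: "\<forall>i<m. \<forall>j<q. convex_fun_vec (nn i) (\<lambda>xi. g i xi $ j)"
    and \<Omega>_cvx: "\<forall>i<m. convex_set_vec (nn i) (\<Omega> i)"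
    and slater: "\<exists>xb\<in>carrier_vec n. (\<forall>i<m. blk xb i \<in> interior_vec (nn i) (\<Omega> i)) \<and>
        sumv p (\<lambda>i. A i *\<^sub>v blk xb i - b i) {..<m} = 0\<^sub>v p \<and>
        (\<forall>j<q. (\<Sum>i<m. g i (blk xb i) $ j) < 0)"
begin

lemma obj_vconvex_on: "vconvex_on (carrier_vec n) obj"
  unfolding objP_def[abs_def] using f_cvx convex_fun_vec_iff by (intro vconvex_on_block_sum) auto

lemma G_affine_index:
  assumes j: "j < p"
  shows "G z $ j = (\<Sum>i<m. row (A i) j \<bullet> blk z i - b i $ j)"
proof -
  have "Gfun A b g i (blk z i) $ j = row (A i) j \<bullet> blk z i - b i $ j" if "i < m" for i
    using Gfun_index_affine[of A i p "nn i" b g "blk z i" q j] A_dim b_dim g_dim that j by auto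
  then show ?thesis using j by (simp add: G_index)
qed

lemma G_nonlinear_index:
  assumes j: "p \<le> j" "j < p + q"
  shows "G z $ j = (\<Sum>i<m. g i (blk z i) $ (j - p))"
proof -
  have "Gfun A b g i (blk z i) $ j = g i (blk z i) $ (j - p)" if "i < m" for i
    using Gfun_index_nonlinear[of A i p "nn i" b g "blk z i" q j] A_dim b_dim g_dim that j by auto
  then show ?thesis using j by (simp add: G_index)
qed

lemma G_vaffine_on: "j < p \<Longrightarrow> vaffine_on (carrier_vec n) (\<lambda>z. G z $ j)"
proof -
  assume j: "j < p"
  have "vaffine_on (carrier_vec n) (\<lambda>z. \<Sum>i<m. row (A i) j \<bullet> blk z i - b i $ j)"
    using A_dim by (intro vaffine_on_block_sum allI impI vaffine_on_inner_minus) (auto simp: row_def)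
  then show ?thesis using G_affine_index[OF j] unfolding vaffine_on_def by simp
qed

lemma G_vconvex_on: "p \<le> j \<Longrightarrow> j < p + q \<Longrightarrow> vconvex_on (carrier_vec n) (\<lambda>z. G z $ j)"
  using vconvex_on_block_sum[of m nn "\<lambda>i u. g i u $ (j - p)"] g_cvx convex_fun_vec_iff
  by (simp add: G_nonlinear_index)

lemma \<Omega>prod_vconvex: "vconvex \<Omega>prod"
  unfolding vconvex_def
proof (intro ballI allI impI)
  fix x y and t :: real assume x: "x \<in> \<Omega>prod" and y: "y \<in> \<Omega>prod" and t: "0 \<le> t \<and> t \<le> 1"
  have "blk (vcomb t x y) i \<in> \<Omega> i" if i: "i < m" for i
    using \<Omega>_cvx x y i t block_vcomb[of x n y "offs nn i" "nn i"] offs_add_le[OF i]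
    unfolding convex_set_vec_def vcomb_def by auto
  then show "vcomb t x y \<in> \<Omega>prod" using x y by auto
qed

lemma \<Omega>prod_core:
  assumes xb: "xb \<in> carrier_vec n" "\<forall>i<m. blk xb i \<in> interior_vec (nn i) (\<Omega> i)"
    and x: "x \<in> \<Omega>prod"
  shows "\<exists>t>1. vcomb t xb x \<in> \<Omega>prod"
proof -
  have "\<forall>i<m. \<exists>e>0. \<forall>z\<in>carrier_vec (nn i). (\<Sum>j<nn i. (z $ j - blk xb i $ j)^2) < e^2 \<longrightarrow> z \<in> \<Omega> i"
    using xb(2) unfolding interior_vec_def by blast
  then obtain e where e: "\<And>i. i < m \<Longrightarrow> e i > 0"
    "\<And>i z. i < m \<Longrightarrow> z \<in> carrier_vec (nn i) \<Longrightarrow> (\<Sum>j<nn i. (z $ j - blk xb i $ j)^2) < (e i)^2 \<Longrightarrow> z \<in> \<Omega> i"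
    by metis
  define D where "D i = (\<Sum>j<nn i. (blk xb i $ j - blk x i $ j)^2)" for i
  define Dt where "Dt = (\<Sum>i<m. D i)"
  have D0: "0 \<le> D i" for i unfolding D_def by (intro sum_nonneg) auto
  have D_Dt: "D i \<le> Dt" if "i < m" for i
    unfolding Dt_def using that D0 by (intro member_le_sum) auto
  have Dt0: "0 \<le> Dt" unfolding Dt_def using D0 by (intro sum_nonneg) auto
  define em where "em = Min (e ` {..<m})"
  have em0: "0 < em" unfolding em_def using m_pos e(1) by (subst Min_gr_iff) auto
  have em_e: "em \<le> e i" if "i < m" for i unfolding em_def using that by (intro Min_le) auto
  define s where "s = em / (1 + Dt)"
  have s0: "0 < s" unfolding s_def using em0 Dt0 by simp
  have "s * s * Dt < s * s * ((1 + Dt) * (1 + Dt))"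
    using Dt0 s0 by (intro mult_strict_left_mono) (auto simp: algebra_simps, smt (verit) mult_nonneg_nonneg)
  then have sD: "s * s * Dt < em * em" unfolding s_def using Dt0 by simp
  have "vcomb (1 + s) xb x \<in> \<Omega>prod"
  proof (intro CollectI conjI allI impI)
    show "vcomb (1 + s) xb x \<in> carrier_vec n" using xb(1) x by simp
    fix i assume i: "i < m"
    have z: "blk (vcomb (1 + s) xb x) i = vcomb (1 + s) (blk xb i) (blk x i)"
      using block_vcomb[of xb n x] xb(1) x offs_add_le[OF i] by auto
    have "(\<Sum>j<nn i. (vcomb (1 + s) (blk xb i) (blk x i) $ j - blk xb i $ j)^2) = s * s * D i"
      unfolding D_def sum_distrib_left
      by (intro sum.cong refl) (simp add: vcomb_index[OF block_carrier block_carrier] power2_eq_square algebra_simps)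
    also have "\<dots> \<le> s * s * Dt" using D_Dt[OF i] s0 by (simp add: mult_left_mono)
    also have "\<dots> < em * em" by (rule sD)
    also have "\<dots> \<le> (e i)^2" using em_e[OF i] em0 by (simp add: power2_eq_square mult_mono)
    finally show "blk (vcomb (1 + s) xb x) i \<in> \<Omega> i" unfolding z using e(2)[OF i] by simp
  qed
  then show ?thesis using s0 by (intro exI[of _ "1 + s"]) auto
qed

lemma slater_point:
  obtains xb where "xb \<in> \<Omega>prod" "\<forall>x\<in>\<Omega>prod. \<exists>t>1. vcomb t xb x \<in> \<Omega>prod"
    "\<forall>j<p. G xb $ j = 0" "\<forall>j. p \<le> j \<and> j < p + q \<longrightarrow> G xb $ j < 0"
proof -
  obtain xb where xb: "xb \<in> carrier_vec n" "\<forall>i<m. blk xb i \<in> interior_vec (nn i) (\<Omega> i)"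
    and xb_aff: "sumv p (\<lambda>i. A i *\<^sub>v blk xb i - b i) {..<m} = 0\<^sub>v p"
    and xb_nonlin: "\<forall>j<q. (\<Sum>i<m. g i (blk xb i) $ j) < 0"
    using slater by blast
  have "G xb $ j = 0" if j: "j < p" for j
  proof -
    have "Gfun A b g i (blk xb i) $ j = (A i *\<^sub>v blk xb i - b i) $ j" if "i < m" for i
      using b_dim g_dim that j unfolding Gfun_def by (auto simp: index_append_vec)
    then have "G xb $ j = (\<Sum>i<m. (A i *\<^sub>v blk xb i - b i) $ j)" using j by (simp add: G_index)
    also have "\<dots> = 0" using xb_aff sumv_index[OF j, of "\<lambda>i. A i *\<^sub>v blk xb i - b i" "{..<m}"] j by simp
    finally show ?thesis .
  qed
  moreover have "G xb $ j < 0" if "p \<le> j" "j < p + q" for j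
    using xb_nonlin that unfolding G_nonlinear_index[OF that] by auto
  moreover have "xb \<in> \<Omega>prod" using xb unfolding interior_vec_def by auto
  ultimately show ?thesis using that \<Omega>prod_core[OF xb] by blast
qed

theorem strong_duality:
  assumes v: "\<forall>z. feasibleP m nn p q A b g \<Omega> z \<longrightarrow> v \<le> obj z"
  shows "\<exists>y\<in>Kpolar p q. \<forall>z\<in>\<Omega>prod. v \<le> obj z + y \<bullet> G z"
proof -
  obtain xb where xb\<Omega>: "xb \<in> \<Omega>prod" and core: "\<forall>x\<in>\<Omega>prod. \<exists>t>1. vcomb t xb x \<in> \<Omega>prod"
    and xb_aff: "\<forall>j<p. G xb $ j = 0" and xb_nonlin: "\<forall>j. p \<le> j \<and> j < p + q \<longrightarrow> G xb $ j < 0"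
    by (rule slater_point)
  define C where "C j x = G x $ j" for j x
  define ineq where "ineq j = (p \<le> j)" for j
  define js where "js = [p..<p+q] @ [0..<p]"
  have set_js: "set js = {..<p+q}" unfolding js_def by auto
  have \<Omega>prod_carrier: "\<Omega>prod \<subseteq> carrier_vec n" by auto
  have xb_C: "\<forall>j\<in>set js. if ineq j then C j xb < 0 else C j xb = 0"
    using xb_aff xb_nonlin unfolding set_js ineq_def C_def by auto
  have lb: "\<forall>x\<in>\<Omega>prod. (\<forall>j\<in>set js. constr_holds ineq C j x) \<longrightarrow> v \<le> obj x"
    using v unfolding feasibleP_iff Kcone_def set_js constr_holds_def ineq_def C_def by auto
  have "\<exists>lam. (\<forall>j\<in>set js. ineq j \<longrightarrow> 0 \<le> lam j) \<and>
      (\<forall>x\<in>\<Omega>prod. v \<le> obj x + (\<Sum>j\<in>set js. lam j * C j x))"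
  proof (rule multipliers_exist[where xb = xb])
    show "vconvex \<Omega>prod" by (rule \<Omega>prod_vconvex)
    show "xb \<in> \<Omega>prod" by (rule xb\<Omega>)
    show "\<forall>j\<in>set js. if ineq j then C j xb < 0 else C j xb = 0" by (rule xb_C)
    show "\<forall>x\<in>\<Omega>prod. (\<forall>j\<in>set js. constr_holds ineq C j x) \<longrightarrow> v \<le> obj x" by (rule lb)
    show "\<forall>j\<in>set js. vconvex_on \<Omega>prod (C j)"
    proof
      fix j assume "j \<in> set js"
      then have "vconvex_on (carrier_vec n) (C j)"
        unfolding set_js C_def using G_vaffine_on G_vconvex_on vaffine_on_imp_vconvex_on
        by (cases "j < p") auto
      then show "vconvex_on \<Omega>prod (C j)" using \<Omega>prod_carrier by (rule vconvex_on_subset)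
    qed
    show "\<forall>j\<in>set js. \<not> ineq j \<longrightarrow> vaffine_on \<Omega>prod (C j)"
      unfolding set_js C_def ineq_def using G_vaffine_on vaffine_on_subset[OF _ \<Omega>prod_carrier] by auto
    show "sorted_wrt (\<lambda>i j. ineq j \<longrightarrow> ineq i) js"
      unfolding js_def sorted_wrt_append ineq_def
      by (auto intro: sorted_wrt_mono_rel[OF _ sorted_wrt_true])
    show "distinct js" unfolding js_def by auto
    show "\<forall>x\<in>\<Omega>prod. \<exists>t>1. vcomb t xb x \<in> \<Omega>prod" by (rule core)
    show "vconvex_on \<Omega>prod obj" using obj_vconvex_on \<Omega>prod_carrier by (rule vconvex_on_subset)
  qed
  then obtain lam where lam: "\<forall>j\<in>set js. ineq j \<longrightarrow> 0 \<le> lam j"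
    "\<forall>x\<in>\<Omega>prod. v \<le> obj x + (\<Sum>j\<in>set js. lam j * C j x)"
    by blast
  define y where "y = vec (p+q) lam"
  have "y \<in> Kpolar p q" using lam(1) unfolding y_def Kpolar_def set_js ineq_def by auto
  moreover have "y \<bullet> G z = (\<Sum>j\<in>set js. lam j * C j z)" for z
    unfolding scalar_prod_def set_js C_def y_def by (simp add: atLeast0LessThan)
  then have "\<forall>z\<in>\<Omega>prod. v \<le> obj z + y \<bullet> G z" using lam(2) by simp
  ultimately show ?thesis by blast
qed

lemma optimal_imp_kkt:
  assumes x: "optimalP m nn p q f A b g \<Omega> x" and y: "optimalD m nn p q f A b g \<Omega> y"
  shows "kkt x y"
proof -
  have x\<Omega>: "x \<in> \<Omega>prod" and xK: "G x \<in> Kcone p q"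
    and xmin: "\<forall>z. feasibleP m nn p q A b g \<Omega> z \<longrightarrow> obj x \<le> obj z"
    using x unfolding optimalP_def feasibleP_iff by auto
  obtain ys where ys: "ys \<in> Kpolar p q" and ys_min: "\<forall>z\<in>\<Omega>prod. obj x \<le> obj z + ys \<bullet> G z"
    using strong_duality xmin by blast
  have "ys \<bullet> G x = 0" using Kpolar_inner_Kcone_nonpos[OF xK ys] ys_min x\<Omega> by force
  then have "dual ys = ereal (obj x)" using dual_eq_at_minimiser[OF x\<Omega> ys] ys_min by simp
  then have dual_y: "ereal (obj x) \<le> dual y"
    using y Kpolar_carrier[OF ys] unfolding optimalD_def by metis
  have yc: "y \<in> carrier_vec (p+q)" using y unfolding optimalD_def by simp
  have y_Lag: "ereal (obj x) \<le> Lag z (consensus m y)" for z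
    using dual_y dual_le_Lag[OF yc] order_trans by blast
  have yK: "y \<in> Kpolar p q"
  proof (rule ccontr)
    assume "y \<notin> Kpolar p q"
    then show False using y_Lag[of x] Lag_consensus_MInfty[OF x\<Omega> yc] by simp
  qed
  have "obj x \<le> obj x + y \<bullet> G x" using y_Lag[of x] Lag_consensus_eq[OF x\<Omega> yK] by simp
  then have yG: "y \<bullet> G x = 0" using Kpolar_inner_Kcone_nonpos[OF xK yK] by simp
  have "obj x \<le> obj z + y \<bullet> G z" if "z \<in> \<Omega>prod" for z
    using y_Lag[of z] Lag_consensus_eq[OF that yK] by simp
  then show ?thesis unfolding kkt_def using x\<Omega> xK yK yG by simp
qed

end

theorem lemma1:
  fixes m p q r :: nat and nn :: "nat \<Rightarrow> nat"
    and f :: "nat \<Rightarrow> real vec \<Rightarrow> real" and A :: "nat \<Rightarrow> real mat" and b :: "nat \<Rightarrow> real vec"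
    and g :: "nat \<Rightarrow> real vec \<Rightarrow> real vec" and \<Omega> :: "nat \<Rightarrow> real vec set"
    and E :: "(nat \<times> nat) set" and L U :: "real mat"
    and x y :: "real vec"
  assumes m: "m \<ge> 2" and nn: "\<forall>i<m. nn i \<ge> 1"
    \<comment> \<open>(A1)\<close>
    and E_V: "E \<subseteq> {..<m} \<times> {..<m}" and E_sym: "sym E"
    and E_conn: "\<forall>i<m. \<forall>j<m. (i, j) \<in> E\<^sup>*"
    and L_dim: "L \<in> carrier_mat m m" and L_sym: "transpose_mat L = L"
    and L_compat: "\<forall>i<m. \<forall>j<m. i \<noteq> j \<and> (i, j) \<notin> E \<longrightarrow> L $$ (i, j) = 0"
    and L_null: "{v \<in> carrier_vec m. L *\<^sub>v v = 0\<^sub>v m} = {c \<cdot>\<^sub>v ones_vec m | c. True}"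
    and U_dim: "U \<in> carrier_mat r m" and L_U: "L = transpose_mat U * U"
    and U_rank: "\<forall>c\<in>carrier_vec r. transpose_mat U *\<^sub>v c = 0\<^sub>v m \<longrightarrow> c = 0\<^sub>v r"
    and U_one: "U *\<^sub>v ones_vec m = 0\<^sub>v r"
    \<comment> \<open>(A2)\<close>
    and A_dim: "\<forall>i<m. A i \<in> carrier_mat p (nn i)" and b_dim: "\<forall>i<m. b i \<in> carrier_vec p"
    and g_dim: "\<forall>i<m. \<forall>xi\<in>carrier_vec (nn i). g i xi \<in> carrier_vec q"
    and f_cvx: "\<forall>i<m. proper_closed_convex_vec (nn i) (f i)"
    and g_cvx: "\<forall>i<m. \<forall>j<q. proper_closed_convex_vec (nn i) (\<lambda>xi. g i xi $ j)"
    and \<Omega>_ne: "\<forall>i<m. \<Omega> i \<noteq> {}" and \<Omega>_closed: "\<forall>i<m. closed_set_vec (nn i) (\<Omega> i)"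
    and \<Omega>_cvx: "\<forall>i<m. convex_set_vec (nn i) (\<Omega> i)"
    and P_solv: "\<exists>x0. optimalP m nn p q f A b g \<Omega> x0"
    \<comment> \<open>(A3)\<close>
    and slater: "\<exists>xb\<in>carrier_vec (\<Sum>i<m. nn i).
        (\<forall>i<m. block xb (offs nn i) (nn i) \<in> interior_vec (nn i) (\<Omega> i)) \<and>
        sumv p (\<lambda>i. A i *\<^sub>v block xb (offs nn i) (nn i) - b i) {..<m} = 0\<^sub>v p \<and>
        (\<forall>j<q. (\<Sum>i<m. g i (block xb (offs nn i) (nn i)) $ j) < 0)"
    and x_dim: "x \<in> carrier_vec (\<Sum>i<m. nn i)" and y_dim: "y \<in> carrier_vec (p+q)"
  shows "(optimalP m nn p q f A b g \<Omega> x \<and> optimalD m nn p q f A b g \<Omega> y) \<longleftrightarrow>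
    (\<exists>Z\<in>carrier_vec (r*(p+q)). \<exists>Y. Y = kron_vec (ones_vec m) y \<and>
       (0\<^sub>v (\<Sum>i<m. nn i), 0\<^sub>v (m*(p+q)), 0\<^sub>v (r*(p+q))) \<in> Phi m nn p q f A b g \<Omega> U x Y Z)"
proof -
  interpret convex_problem m nn p q f A b g \<Omega>
    using m A_dim b_dim g_dim f_cvx g_cvx \<Omega>_cvx slater
    by unfold_locales (auto simp: proper_closed_convex_vec_def)
  have "optimalP m nn p q f A b g \<Omega> x \<and> optimalD m nn p q f A b g \<Omega> y \<longleftrightarrow> kkt x y"
    using optimal_imp_kkt kkt_imp_optimal by blast
  also have "\<dots> \<longleftrightarrow> (\<exists>Z\<in>carrier_vec (r*(p+q)).
      (0\<^sub>v n, 0\<^sub>v (m*(p+q)), 0\<^sub>v (r*(p+q))) \<in> Phi m nn p q f A b g \<Omega> U x (consensus m y) Z)"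
    using kkt_imp_Phi[OF L_dim L_sym L_null U_dim L_U U_one] Phi_imp_kkt[OF U_dim U_one _ x_dim y_dim] by blast
  finally show ?thesis by simp
qed

end
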